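(* Assume (C1) and (C2). Let $m_*:=\inf_{u\in\mathcal{M}}I(u)$. If $u_0\in\mathcal{M}$ and $I(u_0)=m_*$, then $u_0$ is a critical point of $I$, i.e. $\langle I'(u_0),v\rangle=0$ for all $v\in\mathcal{D}$.
   Context: Fix real numbers $p,q,r$ with $1<p<q$, $\frac p2$ a positive integer, and $r\ge1$, and functions $a,b,c:\mathbb{Z}\to(0,+\infty)$. Conditions: - (C1) There is $b_0>0$ with $b(n)\ge b_0$ for all $n$ and $b(n)\to+\infty$ as $|n|\to\infty$. - (C2) There is $c_0>0$ with $c(n)\le c_0$ for all $n$ and $\sum_n c(n)<+\infty$. Notation for a real sequence $u=(u(n))_{n\in\mathbb{Z}}$: $\Delta u(n)=u(n+1)-u(n)$, $u^+(n)=\max\{u(n),0\}$, $u^-(n)=\min\{u(n),0\}$. Spaces: - $E$ is the set of real sequences $u$ with $\|u\|:=\big(\sum_n[a(n)|\Delta u(n)|^p+b(n)|u(n)|^p]\big)^{1/p}<\infty$. - $\mathcal{D}=\{u\in E:\sum_n c(n)|u(n)|^q\ln|u(n)|^r<+\infty\}$, where terms with $u(n)=0$ are read as $0$. It carries the norm $\|\cdot\|$. For $u,v\in\mathcal{D}$: - $I(u)=\frac1p\|u\|^p+\frac{r}{q^2}\sum_n c(n)|u(n)|^q-\frac1q\sum_n c(n)|u(n)|^q\ln|u(n)|^r$. - $\langle I'(u),v\rangle=\sum_n[a(n)|\Delta u(n)|^{p-2}\Delta u(n)\Delta v(n)+b(n)|u(n)|^{p-2}u(n)v(n)]-\sum_n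 c(n)|u(n)|^{q-2}u(n)v(n)\ln|u(n)|^r$. $\mathcal{M}=\{u\in\mathcal{D}:u^+\ne0,\ u^-\neq0,\ \langle I'(u),u^+\rangle=0,\ \langle I'(u),u^-\rangle=0\}$. *)

theory Defs
  imports "HOL-Analysis.Analysis"
begin

definition fdiff :: "(int \<Rightarrow> real) \<Rightarrow> int \<Rightarrow> real" where
  "fdiff u n = u (n + 1) - u n"

definition posp :: "(int \<Rightarrow> real) \<Rightarrow> int \<Rightarrow> real" where
  "posp u n = max (u n) 0"

definition negp :: "(int \<Rightarrow> real) \<Rightarrow> int \<Rightarrow> real" where
  "negp u n = min (u n) 0"

definition Eterm :: "real \<Rightarrow> (int \<Rightarrow> real) \<Rightarrow> (int \<Rightarrow> real) \<Rightarrow> (int \<Rightarrow> real) \<Rightarrow> int \<Rightarrow> real" where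
  "Eterm p a b u n = a n * \<bar>fdiff u n\<bar> powr p + b n * \<bar>u n\<bar> powr p"

definition Espace :: "real \<Rightarrow> (int \<Rightarrow> real) \<Rightarrow> (int \<Rightarrow> real) \<Rightarrow> (int \<Rightarrow> real) set" where
  "Espace p a b = {u. Eterm p a b u summable_on UNIV}"

definition Enorm :: "real \<Rightarrow> (int \<Rightarrow> real) \<Rightarrow> (int \<Rightarrow> real) \<Rightarrow> (int \<Rightarrow> real) \<Rightarrow> real" where
  "Enorm p a b u = (\<Sum>\<^sub>\<infinity>n. Eterm p a b u n) powr (1 / p)"

text \<open>c(n) |u(n)|^q ln(|u(n)|^r); for u(n) = 0 this is 0 since 0 powr q = 0.\<close>
definition logterm :: "real \<Rightarrow> real \<Rightarrow> (int \<Rightarrow> real) \<Rightarrow> (int \<Rightarrow> real) \<Rightarrow> int \<Rightarrow> real" where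
  "logterm q r c u n = (if u n = 0 then 0 else c n * \<bar>u n\<bar> powr q * ln (\<bar>u n\<bar> powr r))"

definition Dspace :: "real \<Rightarrow> real \<Rightarrow> real \<Rightarrow> (int \<Rightarrow> real) \<Rightarrow> (int \<Rightarrow> real) \<Rightarrow> (int \<Rightarrow> real) \<Rightarrow> (int \<Rightarrow> real) set" where
  "Dspace p q r a b c = {u \<in> Espace p a b. logterm q r c u summable_on UNIV}"

definition Ifun :: "real \<Rightarrow> real \<Rightarrow> real \<Rightarrow> (int \<Rightarrow> real) \<Rightarrow> (int \<Rightarrow> real) \<Rightarrow> (int \<Rightarrow> real) \<Rightarrow> (int \<Rightarrow> real) \<Rightarrow> real" where
  "Ifun p q r a b c u =
     (1 / p) * (Enorm p a b u) powr p
     + (r / q\<^sup>2) * (\<Sum>\<^sub>\<infinity>n. c n * \<bar>u n\<bar> powr q)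
     - (1 / q) * (\<Sum>\<^sub>\<infinity>n. logterm q r c u n)"

definition dIfun :: "real \<Rightarrow> real \<Rightarrow> real \<Rightarrow> (int \<Rightarrow> real) \<Rightarrow> (int \<Rightarrow> real) \<Rightarrow> (int \<Rightarrow> real) \<Rightarrow> (int \<Rightarrow> real) \<Rightarrow> (int \<Rightarrow> real) \<Rightarrow> real" where
  "dIfun p q r a b c u v =
     (\<Sum>\<^sub>\<infinity>n. a n * \<bar>fdiff u n\<bar> powr (p - 2) * fdiff u n * fdiff v n
            + b n * \<bar>u n\<bar> powr (p - 2) * u n * v n)
     - (\<Sum>\<^sub>\<infinity>n. (if u n = 0 then 0 else
            c n * \<bar>u n\<bar> powr (q - 2) * u n * v n * ln (\<bar>u n\<bar> powr r)))"

definition Mset :: "real \<Rightarrow> real \<Rightarrow> real \<Rightarrow> (int \<Rightarrow> real) \<Rightarrow> (int \<Rightarrow> real) \<Rightarrow> (int \<Rightarrow> real) \<Rightarrow> (int \<Rightarrow> real) set" where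
  "Mset p q r a b c = {u \<in> Dspace p q r a b c. posp u \<noteq> (\<lambda>_. 0) \<and> negp u \<noteq> (\<lambda>_. 0)
      \<and> dIfun p q r a b c u (posp u) = 0 \<and> dIfun p q r a b c u (negp u) = 0}"

end

theory Submission
  imports Defs
begin

text \<open>
  Since p = 2k, the p-th powers are polynomial, and every sequence of finite energy is bounded
  because b is bounded below, so all series involved converge absolutely.
  The algebraic core is a Nehari-type inequality: for u in M and s, t > 0,
  I(u) - I(s u^+ + t u^-) is a sum of nonnegative terms (by convexity of x^p and
  1 - y + y ln y \<ge> 0), positive unless s = t = 1.
  If <I'(u0), v> > 0 for some v, deform the rescalings into
  h(s,t) = s u0^+ + t u0^- - \<epsilon> \<eta>(s,t) v with a cutoff \<eta> supported near (1,1).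
  On the boundary of a square [\<delta>,2]^2 the pair (<I'(h), h^+>, <I'(h), h^->) has the sign
  pattern of the Poincare--Miranda theorem, so some h(s,t) lies in M.
  But I(h(s,t)) < I(u0): away from (1,1) by the Nehari inequality, and near (1,1) because moving
  along v decreases I at rate at least <I'(u0), v>/2. This contradicts the minimality of I(u0).
\<close>

section \<open>Elementary real inequalities\<close>

lemma abs_powr_mult_ln_le:
  fixes x e :: real
  assumes "0 < x" "x \<le> 1" "0 < e"
  shows "\<bar>x powr e * ln x\<bar> \<le> (2/e) * x powr (e/2)"
proof -
  have "ln (1/x) \<le> (1/x) powr (e/2) / (e/2)"
    using assms by (intro ln_powr_bound) auto
  moreover have "(1/x) powr (e/2) = x powr (-(e/2))"
    using assms by (simp add: powr_divide powr_minus_divide)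
  ultimately have "- ln x \<le> (2/e) * x powr (-(e/2))"
    using assms by (simp add: ln_div mult.commute)
  hence "x powr e * (- ln x) \<le> x powr e * ((2/e) * x powr (-(e/2)))"
    by (intro mult_left_mono) auto
  also have "\<dots> = (2/e) * x powr (e/2)"
    by (simp add: powr_add[symmetric])
  finally show ?thesis
    using assms by (simp add: mult_nonneg_nonpos)
qed

lemma abs_powr_eq_mult: "(x::real) \<noteq> 0 \<Longrightarrow> \<bar>x\<bar> powr e = \<bar>x\<bar> * \<bar>x\<bar> powr (e - 1)"
  using powr_add[of "\<bar>x\<bar>" "e - 1" 1] by simp

lemma tendsto_abs_powr_mult_ln_0:
  fixes e :: real
  assumes "0 < e"
  shows "((\<lambda>x. \<bar>x\<bar> powr e * ln \<bar>x\<bar>) \<longlongrightarrow> 0) (at 0)"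
proof (rule Lim_null_comparison)
  show "\<forall>\<^sub>F x in at 0. norm (\<bar>x\<bar> powr e * ln \<bar>x\<bar>) \<le> (2/e) * \<bar>x\<bar> powr (e/2)"
    unfolding eventually_at
    by (rule exI[of _ 1]) (use assms abs_powr_mult_ln_le in auto)
  show "((\<lambda>x. (2/e) * \<bar>x\<bar> powr (e/2)) \<longlongrightarrow> 0) (at 0)"
    using assms by (auto intro!: tendsto_eq_intros tendsto_zero_powrI)
qed

lemma one_minus_add_mult_ln_nonneg:
  fixes y :: real
  assumes "0 < y"
  shows "0 \<le> 1 - y + y * ln y"
proof -
  have "- ln y \<le> 1/y - 1"
    using ln_le_minus_one[of "1/y"] assms by (simp add: ln_div)
  hence "y * (- ln y) \<le> y * (1/y - 1)"
    using assms by (intro mult_left_mono) auto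
  thus ?thesis
    using assms by (simp add: algebra_simps)
qed

lemma one_minus_add_mult_ln_pos:
  fixes y :: real
  assumes "0 < y" "y \<noteq> 1"
  shows "0 < 1 - y + y * ln y"
proof -
  have "ln (1/y) < 1/y - 1"
    using ln_le_minus_one[of "1/y"] ln_eq_minus_one[of "1/y"] assms by fastforce
  hence "- ln y < 1/y - 1"
    using assms by (simp add: ln_div)
  hence "y * (- ln y) < y * (1/y - 1)"
    using assms by (intro mult_strict_left_mono) auto
  thus ?thesis
    using assms by (simp add: algebra_simps)
qed

lemma even_power_add_le:
  fixes x y :: real
  assumes "even n"
  shows "(x + y) ^ n \<le> 2 ^ n * (x ^ n + y ^ n)"
proof -
  let ?m = "max \<bar>x\<bar> \<bar>y\<bar>"
  have "(x + y) ^ n = \<bar>x + y\<bar> ^ n"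
    using assms by (simp add: power_even_abs)
  also have "\<dots> \<le> (2 * ?m) ^ n"
    by (intro power_mono) auto
  also have "\<dots> \<le> 2 ^ n * (\<bar>x\<bar> ^ n + \<bar>y\<bar> ^ n)"
    by (auto simp: power_mult_distrib max_def)
  finally show ?thesis
    using assms by (simp add: power_even_abs)
qed

lemma abs_power_pred_mult_le:
  fixes x y :: real
  assumes "even n" "0 < n"
  shows "\<bar>x ^ (n - 1) * y\<bar> \<le> x ^ n + y ^ n"
proof -
  let ?m = "max \<bar>x\<bar> \<bar>y\<bar>"
  have "\<bar>x ^ (n - 1) * y\<bar> \<le> ?m ^ (n - 1) * ?m"
    by (auto simp: abs_mult power_abs intro!: mult_mono power_mono)
  also have "\<dots> = ?m ^ n"
    using assms by (simp add: power_eq_if[of _ n])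
  also have "\<dots> \<le> \<bar>x\<bar> ^ n + \<bar>y\<bar> ^ n"
    by (simp add: max_def)
  finally show ?thesis
    using assms by (simp add: power_even_abs)
qed

lemma odd_power_pos_combination_mult_nonneg:
  fixes x y s t :: real
  assumes "odd m" "0 \<le> x * y" "0 \<le> s" "0 \<le> t"
  shows "0 \<le> (s * x + t * y) ^ m * x"
proof (cases "0 \<le> x \<and> 0 \<le> y")
  case True
  thus ?thesis
    using assms by simp
next
  case False
  hence "x \<le> 0" "y \<le> 0"
    using assms(2) by (auto simp: zero_le_mult_iff)
  hence "s * x \<le> 0" "t * y \<le> 0"
    using assms by (simp_all add: mult_nonneg_nonpos)
  hence "0 \<le> - (s * x + t * y)"
    by linarith
  hence "0 \<le> (- (s * x + t * y)) ^ m"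
    by (rule zero_le_power)
  hence "(s * x + t * y) ^ m \<le> 0"
    using power_minus_odd[OF assms(1), of "s * x + t * y"] by linarith
  thus ?thesis
    using \<open>x \<le> 0\<close> by (simp add: mult_nonpos_nonpos)
qed

lemma odd_power_pos_combination_mult_le:
  fixes x y s t :: real
  assumes "odd m" "0 \<le> x * y" "0 \<le> t" "t \<le> s"
  shows "(s * x + t * y) ^ m * x \<le> s ^ m * ((x + y) ^ m * x)"
proof -
  have nonneg: "(s * X + t * Y) ^ m * X \<le> s ^ m * ((X + Y) ^ m * X)" if "0 \<le> X" "0 \<le> Y" for X Y
  proof -
    have "(s * X + t * Y) ^ m \<le> (s * (X + Y)) ^ m"
      using that assms by (intro power_mono) (auto simp: algebra_simps intro: mult_left_mono)
    hence "(s * X + t * Y) ^ m * X \<le> (s * (X + Y)) ^ m * X"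
      using that by (intro mult_right_mono)
    thus ?thesis
      by (simp add: power_mult_distrib)
  qed
  show ?thesis
  proof (cases "0 \<le> x \<and> 0 \<le> y")
    case True
    thus ?thesis
      using nonneg by blast
  next
    case False
    hence "0 \<le> - x" "0 \<le> - y"
      using assms(2) by (auto simp: zero_le_mult_iff)
    have "(s * (- x) + t * (- y)) ^ m = - ((s * x + t * y) ^ m)"
      "(- x + - y) ^ m = - ((x + y) ^ m)"
      using power_minus_odd[OF assms(1)] by (metis minus_add_distrib mult_minus_right)+
    with nonneg[OF \<open>0 \<le> - x\<close> \<open>0 \<le> - y\<close>] show ?thesis
      by simp
  qed
qed

lemma convex_comb_power_le:
  fixes la mu s t q :: real
  assumes n: "0 < n" "real n \<le> q" and lm: "0 \<le> la" "0 \<le> mu" "la + mu = 1"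
    and s: "0 < s" and t: "0 < t"
  shows "(la * s + mu * t) ^ n \<le> 1 - (n / q) * (1 - (la * s powr q + mu * t powr q))"
proof -
  define m Q where "m = la * s + mu * t" and "Q = la * s powr q + mu * t powr q"
  have convex_pos: "0 < la * x + mu * y" if "0 < x" "0 < y" for x y
  proof -
    have "la * min x y + mu * min x y \<le> la * x + mu * y"
      using lm by (intro add_mono mult_left_mono) auto
    thus ?thesis
      using lm that by (simp flip: distrib_right)
  qed
  have m: "0 < m" and Q: "0 < Q"
    unfolding m_def Q_def using s t by (auto intro: convex_pos)
  have "la = 1 - mu"
    using lm by simp
  have "m powr q \<le> Q"
    using convex_onD[OF powr_convex[of q], of mu s t] n lm(1,2) s t
    unfolding m_def Q_def \<open>la = 1 - mu\<close> by simp
  have q: "0 < q" "n / q \<le> 1"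
    using n by auto
  have "m ^ n = (m powr q) powr (n / q)"
    using m q by (simp add: powr_powr powr_realpow)
  also have "\<dots> \<le> Q powr (n / q)"
    using \<open>m powr q \<le> Q\<close> q by (intro powr_mono2) auto
  also have "\<dots> \<le> (n / q) * Q + (1 - n / q) * 1"
    using Youngs_inequality_0[of "n / q" "1 - n / q" Q 1] q Q by simp
  finally show ?thesis
    unfolding m_def Q_def by (simp add: right_diff_distrib)
qed

lemma power_scaling_ineq_nonneg:
  fixes X Y s t q :: real
  assumes n: "0 < n" "real n \<le> q" and X: "0 \<le> X" and Y: "0 \<le> Y" and s: "0 < s" and t: "0 < t"
  shows "(n/q) * (X + Y) ^ (n - 1) * ((1 - s powr q) * X + (1 - t powr q) * Y)
           \<le> (X + Y) ^ n - (s * X + t * Y) ^ n"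
proof (cases "X + Y = 0")
  case True
  hence "X = 0" "Y = 0"
    using X Y by auto
  thus ?thesis
    using n by simp
next
  case False
  define Z where "Z = X + Y"
  have Z: "0 < Z"
    using False X Y unfolding Z_def by simp
  define la mu where "la = X / Z" and "mu = Y / Z"
  define Q where "Q = la * s powr q + mu * t powr q"
  have "0 \<le> la" "0 \<le> mu" "la + mu = 1"
    using X Y Z unfolding la_def mu_def Z_def by (auto simp: divide_simps)
  hence mn: "(la * s + mu * t) ^ n \<le> 1 - (n / q) * (1 - Q)"
    unfolding Q_def using convex_comb_power_le n s t by blast
  have "s * X + t * Y = Z * (la * s + mu * t)" "Z * Q = X * s powr q + Y * t powr q"
    unfolding Q_def la_def mu_def using Z by (simp_all add: field_simps)
  hence sXtY: "s * X + t * Y = Z * (la * s + mu * t)"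
    and ZQ: "Z * (1 - Q) = (1 - s powr q) * X + (1 - t powr q) * Y"
    unfolding Z_def by (simp_all add: algebra_simps)
  have "(s * X + t * Y) ^ n = Z ^ n * (la * s + mu * t) ^ n"
    unfolding sXtY by (simp add: power_mult_distrib)
  also have "\<dots> \<le> Z ^ n * (1 - (n / q) * (1 - Q))"
    using mn Z by (intro mult_left_mono) auto
  also have "\<dots> = Z ^ n - (n / q) * Z ^ (n - 1) * (Z * (1 - Q))"
    using n by (simp add: power_eq_if algebra_simps)
  also have "\<dots> = Z ^ n - (n / q) * Z ^ (n - 1) * ((1 - s powr q) * X + (1 - t powr q) * Y)"
    unfolding ZQ ..
  finally show ?thesis
    unfolding Z_def by simp
qed

lemma power_scaling_ineq:
  fixes x y s t q :: real
  assumes "even n" "0 < n" "real n \<le> q" "0 \<le> x * y" "0 < s" "0 < t"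
  shows "(n/q) * (x + y) ^ (n - 1) * ((1 - s powr q) * x + (1 - t powr q) * y)
           \<le> (x + y) ^ n - (s * x + t * y) ^ n"
proof (cases "0 \<le> x \<and> 0 \<le> y")
  case True
  thus ?thesis
    using assms power_scaling_ineq_nonneg by blast
next
  case False
  hence "0 \<le> - x" "0 \<le> - y"
    using assms(4) by (auto simp: zero_le_mult_iff)
  have "odd (n - 1)"
    using assms(1,2) by simp
  hence "(- x + - y) ^ (n - 1) = - ((x + y) ^ (n - 1))"
    "(- x + - y) ^ n = (x + y) ^ n" "(s * - x + t * - y) ^ n = (s * x + t * y) ^ n"
    using power_minus_odd[of "n - 1"] power_minus_even[OF assms(1)]
    by (metis minus_add_distrib mult_minus_right)+
  with power_scaling_ineq_nonneg[OF assms(2,3) \<open>0 \<le> - x\<close> \<open>0 \<le> - y\<close> assms(5,6)]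
  show ?thesis
    by (simp add: algebra_simps add_divide_distrib diff_divide_distrib)
qed

lemma abs_lincomb3_le:
  fixes s t x A B C :: real
  assumes "\<bar>s\<bar> \<le> 2" "\<bar>t\<bar> \<le> 2" "\<bar>x\<bar> \<le> 2"
  shows "\<bar>s * A + t * B - x * C\<bar> \<le> 2 * (\<bar>A\<bar> + \<bar>B\<bar> + \<bar>C\<bar>)"
proof -
  have "\<bar>s * A\<bar> \<le> 2 * \<bar>A\<bar>" "\<bar>t * B\<bar> \<le> 2 * \<bar>B\<bar>" "\<bar>x * C\<bar> \<le> 2 * \<bar>C\<bar>"
    using assms by (auto simp: abs_mult intro: mult_right_mono)
  moreover have "\<bar>s * A + t * B - x * C\<bar> \<le> \<bar>s * A\<bar> + \<bar>t * B\<bar> + \<bar>x * C\<bar>"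
    by linarith
  ultimately show ?thesis
    by (simp add: distrib_left)
qed

section \<open>Unordered sums and the Poincare--Miranda theorem in the plane\<close>

lemma summable_on_comparison_abs:
  fixes f M :: "'i \<Rightarrow> real"
  assumes "M summable_on A" "\<And>x. x \<in> A \<Longrightarrow> \<bar>f x\<bar> \<le> M x"
  shows "f summable_on A"
proof -
  have "(\<lambda>x. norm (f x)) summable_on A"
    by (rule Infinite_Sum.abs_summable_on_comparison_test'[OF assms(1)]) (use assms in auto)
  thus ?thesis
    using summable_on_iff_abs_summable_on_real by blast
qed

lemma summable_on_diff:
  fixes f g :: "'i \<Rightarrow> real"
  shows "f summable_on A \<Longrightarrow> g summable_on A \<Longrightarrow> (\<lambda>x. f x - g x) summable_on A"
  using summable_on_add[of f A "\<lambda>x. - g x"] summable_on_uminus[of g A] by simp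

lemma infsum_diff:
  fixes f g :: "'i \<Rightarrow> real"
  shows "f summable_on A \<Longrightarrow> g summable_on A \<Longrightarrow> infsum (\<lambda>x. f x - g x) A = infsum f A - infsum g A"
  using infsum_add[of f A "\<lambda>x. - g x"] summable_on_uminus[of g A] infsum_uminus[of g A] by simp

lemma infsum_scaled_diff:
  fixes f g :: "'i \<Rightarrow> real"
  assumes "f summable_on A" "g summable_on A"
  shows "infsum (\<lambda>x. \<alpha> * f x - \<beta> * g x) A = \<alpha> * infsum f A - \<beta> * infsum g A"
  using assms by (simp add: infsum_diff summable_on_cmult_right infsum_cmult_right')

lemma infsum_pos:
  fixes f :: "'i \<Rightarrow> real"
  assumes "f summable_on UNIV" "\<And>n. 0 \<le> f n" "0 < f k"
  shows "0 < infsum f UNIV"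
  using has_sum_strict_mono[OF has_sum_0[of UNIV "\<lambda>_. 0"] has_sum_infsum[OF assms(1)], of k] assms(2,3)
  by auto

lemma summable_on_mult_bounded:
  fixes c y :: "'i \<Rightarrow> real"
  assumes "c summable_on A" "\<And>n. n \<in> A \<Longrightarrow> \<bar>y n\<bar> \<le> K"
  shows "(\<lambda>n. c n * y n) summable_on A"
proof (rule summable_on_comparison_abs)
  have "(\<lambda>n. \<bar>c n\<bar>) summable_on A"
    using assms(1) summable_on_iff_abs_summable_on_real by auto
  thus "(\<lambda>n. \<bar>c n\<bar> * K) summable_on A"
    by (rule summable_on_cmult_left)
  show "\<bar>c n * y n\<bar> \<le> \<bar>c n\<bar> * K" if "n \<in> A" for n
    using assms(2)[OF that] by (simp add: abs_mult mult_left_mono)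
qed

lemma continuous_bounded_on_abs_le:
  fixes g :: "real \<Rightarrow> real"
  assumes "continuous_on UNIV g"
  shows "\<exists>K. \<forall>x. \<bar>x\<bar> \<le> B \<longrightarrow> \<bar>g x\<bar> \<le> K"
proof -
  have "compact (g ` cball 0 B)"
    using assms by (intro compact_continuous_image) (auto intro: continuous_on_subset)
  then obtain K where "\<forall>y \<in> g ` cball 0 B. norm y \<le> K"
    using compact_imp_bounded bounded_iff by metis
  thus ?thesis
    by (intro exI[of _ K]) (auto simp: mem_cball_0)
qed

lemma infsum_eq_sum_add_infsum_compl:
  fixes h :: "'i \<Rightarrow> real"
  assumes "h summable_on UNIV" "finite F"
  shows "infsum h UNIV = sum h F + infsum h (-F)"
proof -
  have "infsum h UNIV = infsum h (F \<union> -F)"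
    by simp
  also have "\<dots> = sum h F + infsum h (-F)"
    using assms summable_on_subset_banach by (subst infsum_Un_disjoint) auto
  finally show ?thesis .
qed

lemma infsum_compl_finite_le:
  fixes M :: "'i \<Rightarrow> real"
  assumes "M summable_on UNIV" "0 < e"
  shows "\<exists>F. finite F \<and> infsum M (-F) \<le> e"
proof -
  obtain F where "finite F" "dist (sum M F) (infsum M UNIV) \<le> e"
    using infsum_finite_approximation[OF assms] by auto
  thus ?thesis
    using infsum_eq_sum_add_infsum_compl[OF assms(1)] by (auto simp: dist_real_def)
qed

lemma continuous_on_finite_family:
  fixes f :: "'i \<Rightarrow> 'a::metric_space \<Rightarrow> real"
  assumes "finite F" "\<And>n. continuous_on K (f n)" "x0 \<in> K" "0 < e"
  shows "\<exists>d>0. \<forall>n x. n \<in> F \<longrightarrow> x \<in> K \<longrightarrow> dist x x0 < d \<longrightarrow> \<bar>f n x - f n x0\<bar> < e"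
proof -
  have "\<forall>n\<in>F. \<exists>d>0. \<forall>x\<in>K. dist x x0 < d \<longrightarrow> dist (f n x) (f n x0) < e"
    using assms(2-4) unfolding continuous_on_iff by blast
  then obtain dd where dd: "\<And>n. n \<in> F \<Longrightarrow> dd n > 0 \<and> (\<forall>x\<in>K. dist x x0 < dd n \<longrightarrow> dist (f n x) (f n x0) < e)"
    by metis
  define d where "d = Min (insert 1 (dd ` F))"
  have d0: "0 < d"
    unfolding d_def using assms(1) dd by (subst Min_gr_iff) auto
  have dle: "d \<le> dd n" if "n \<in> F" for n
    unfolding d_def using assms(1) that by (intro Min_le) auto
  have "\<bar>f n x - f n x0\<bar> < e" if "n \<in> F" "x \<in> K" "dist x x0 < d" for n x
  proof -
    have "dist x x0 < dd n"
      using that dle by (meson order_less_le_trans)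
    thus ?thesis
      using dd that by (simp add: dist_real_def)
  qed
  thus ?thesis
    using d0 by blast
qed

lemma dominated_infsum_close:
  fixes f :: "int \<Rightarrow> 'a::metric_space \<Rightarrow> real" and M :: "int \<Rightarrow> real"
  assumes M: "M summable_on UNIV" and bd: "\<And>n x. x \<in> K \<Longrightarrow> \<bar>f n x\<bar> \<le> M n"
    and ct: "\<And>n. continuous_on K (f n)" and x0: "x0 \<in> K" and e: "0 < e"
  shows "\<exists>d>0. \<forall>g::int \<Rightarrow> 'a. (\<forall>n. g n \<in> K \<and> dist (g n) x0 < d) \<longrightarrow>
           \<bar>infsum (\<lambda>n. f n (g n)) UNIV - infsum (\<lambda>n. f n x0) UNIV\<bar> \<le> e"
proof -
  \<comment> \<open>the tail outside a finite set F is uniformly small, and on F we use continuity\<close>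
  obtain F where F: "finite F" and tail: "infsum M (-F) \<le> e/4"
    using infsum_compl_finite_le[OF M, of "e/4"] e by auto
  define e1 where "e1 = e / (2 * (real (card F) + 1))"
  have e1: "0 < e1"
    using e by (simp add: e1_def add_pos_nonneg)
  obtain d where d0: "0 < d" and d: "\<forall>n x. n \<in> F \<longrightarrow> x \<in> K \<longrightarrow> dist x x0 < d \<longrightarrow> \<bar>f n x - f n x0\<bar> < e1"
    using continuous_on_finite_family[where f = f, OF F ct x0 e1] by blast
  show ?thesis
  proof (intro exI[of _ d] conjI d0 allI impI)
    fix g :: "int \<Rightarrow> 'a" assume g: "\<forall>n. g n \<in> K \<and> dist (g n) x0 < d"
    define h where "h n = f n (g n) - f n x0" for n
    have hb: "\<bar>h n\<bar> \<le> 2 * M n" for n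
      using bd[of "g n" n] bd[OF x0, of n] g unfolding h_def by auto
    have sM2: "(\<lambda>n. 2 * M n) summable_on A" for A
      using M summable_on_subset_banach summable_on_cmult_right by blast
    have sh: "h summable_on UNIV" "(\<lambda>n. \<bar>h n\<bar>) summable_on -F"
      by (rule summable_on_comparison_abs[OF sM2]; use hb in simp)+
    have "infsum (\<lambda>n. f n (g n)) UNIV - infsum (\<lambda>n. f n x0) UNIV = infsum h UNIV"
      unfolding h_def using g x0 bd
      by (intro infsum_diff[symmetric] summable_on_comparison_abs[OF M]) auto
    also have "\<dots> = sum h F + infsum h (-F)"
      by (rule infsum_eq_sum_add_infsum_compl[OF sh(1) F])
    finally have eq: "infsum (\<lambda>n. f n (g n)) UNIV - infsum (\<lambda>n. f n x0) UNIV = sum h F + infsum h (-F)" .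
    have "\<bar>sum h F\<bar> \<le> (\<Sum>n\<in>F. \<bar>h n\<bar>)"
      by (rule sum_abs)
    also have "\<dots> \<le> (\<Sum>n\<in>F. e1)"
    proof (rule sum_mono)
      fix n assume "n \<in> F"
      thus "\<bar>h n\<bar> \<le> e1"
        using d[rule_format, of n "g n"] g unfolding h_def by (meson less_imp_le)
    qed
    also have "\<dots> \<le> e/2"
      unfolding e1_def using e by (simp add: field_simps)
    finally have head: "\<bar>sum h F\<bar> \<le> e/2" .
    have "\<bar>infsum h (-F)\<bar> \<le> infsum (\<lambda>n. \<bar>h n\<bar>) (-F)"
      using norm_infsum_bound[of h "-F"] sh(2) by simp
    also have "\<dots> \<le> infsum (\<lambda>n. 2 * M n) (-F)"
      using hb by (intro infsum_mono[OF sh(2) sM2])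
    also have "\<dots> \<le> e/2"
      using tail by (simp add: infsum_cmult_right')
    finally show "\<bar>infsum (\<lambda>n. f n (g n)) UNIV - infsum (\<lambda>n. f n x0) UNIV\<bar> \<le> e"
      unfolding eq using head by linarith
  qed
qed

lemma continuous_on_infsum_dominated:
  fixes f :: "int \<Rightarrow> 'a::metric_space \<Rightarrow> real" and M :: "int \<Rightarrow> real"
  assumes M: "M summable_on UNIV" and bd: "\<And>n x. x \<in> K \<Longrightarrow> \<bar>f n x\<bar> \<le> M n"
    and ct: "\<And>n. continuous_on K (f n)"
  shows "continuous_on K (\<lambda>x. infsum (\<lambda>n. f n x) UNIV)"
  unfolding continuous_on_iff
proof (intro ballI allI impI)
  fix x0 and e :: real assume x0: "x0 \<in> K" and e: "0 < e"
  obtain d where d: "d > 0" "\<forall>g::int \<Rightarrow> 'a. (\<forall>n. g n \<in> K \<and> dist (g n) x0 < d) \<longrightarrow>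
           \<bar>infsum (\<lambda>n. f n (g n)) UNIV - infsum (\<lambda>n. f n x0) UNIV\<bar> \<le> e/2"
    using dominated_infsum_close[OF M bd ct x0, of "e/2"] e by auto
  show "\<exists>d>0. \<forall>x\<in>K. dist x x0 < d \<longrightarrow> dist (infsum (\<lambda>n. f n x) UNIV) (infsum (\<lambda>n. f n x0) UNIV) < e"
  proof (intro exI[of _ d] conjI d(1) ballI impI)
    fix x assume "x \<in> K" "dist x x0 < d"
    hence "\<bar>infsum (\<lambda>n. f n x) UNIV - infsum (\<lambda>n. f n x0) UNIV\<bar> \<le> e/2"
      using d(2)[rule_format, of "\<lambda>n. x"] by auto
    thus "dist (infsum (\<lambda>n. f n x) UNIV) (infsum (\<lambda>n. f n x0) UNIV) < e"
      using e by (simp add: dist_real_def)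
  qed
qed

lemma dist_Pair_le_add: "dist (a, b) (c, d) \<le> dist a c + dist b d"
  unfolding dist_Pair_Pair by (rule sqrt_sum_squares_le_sum) auto

lemma poincare_miranda_square:
  fixes F :: "real \<times> real \<Rightarrow> real \<times> real" and d R :: real
  assumes dR: "d < R" and ct: "continuous_on ({d..R} \<times> {d..R}) F"
    and left: "\<And>t. d \<le> t \<Longrightarrow> t \<le> R \<Longrightarrow> fst (F (d, t)) > 0"
    and right: "\<And>t. d \<le> t \<Longrightarrow> t \<le> R \<Longrightarrow> fst (F (R, t)) < 0"
    and bottom: "\<And>s. d \<le> s \<Longrightarrow> s \<le> R \<Longrightarrow> snd (F (s, d)) > 0"
    and top: "\<And>s. d \<le> s \<Longrightarrow> s \<le> R \<Longrightarrow> snd (F (s, R)) < 0"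
  shows "\<exists>s t. d \<le> s \<and> s \<le> R \<and> d \<le> t \<and> t \<le> R \<and> F (s, t) = (0, 0)"
proof -
  let ?S = "{d..R} \<times> {d..R}"
  \<comment> \<open>A fixed point of the truncated map x + F(x) is a zero of F, by the boundary signs.\<close>
  define G where "G x = (max d (min R (fst x + fst (F x))), max d (min R (snd x + snd (F x))))" for x
  have "continuous_on ?S G" "G \<in> ?S \<rightarrow> ?S" "compact ?S" "convex ?S" "?S \<noteq> {}"
    using dR unfolding G_def
    by (auto intro!: continuous_intros ct compact_Times convex_Times)
  then obtain s t where st: "(s, t) \<in> ?S" "G (s, t) = (s, t)"
    using brouwer by (metis surj_pair)
  have "fst (F (s, t)) = 0"
    using st left[of t] right[of t] unfolding G_def by (auto simp: max_def min_def split: if_splits)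
  moreover have "snd (F (s, t)) = 0"
    using st bottom[of s] top[of s] unfolding G_def by (auto simp: max_def min_def split: if_splits)
  ultimately show ?thesis
    using st(1) by (intro exI[of _ s] exI[of _ t]) (auto simp: prod_eq_iff)
qed

section \<open>Positive and negative parts, rescalings and deformations of sequences\<close>

lemma fdiff_lin: "fdiff (\<lambda>n. s * u n + t * v n) n = s * fdiff u n + t * fdiff v n"
  by (simp add: fdiff_def algebra_simps)

lemma fdiff_uminus: "fdiff (\<lambda>n. - u n) n = - fdiff u n"
  by (simp add: fdiff_def)

lemma fdiff_scale: "fdiff (\<lambda>n. s * u n) n = s * fdiff u n"
  by (simp add: fdiff_def algebra_simps)

lemma abs_fdiff_posp_le: "\<bar>fdiff (posp u) n\<bar> \<le> \<bar>fdiff u n\<bar>"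
  by (simp add: fdiff_def posp_def max_def)

lemma abs_fdiff_negp_le: "\<bar>fdiff (negp u) n\<bar> \<le> \<bar>fdiff u n\<bar>"
  by (simp add: fdiff_def negp_def min_def)

lemma fdiff_posp_mult_fdiff_negp_nonneg: "0 \<le> fdiff (posp u) n * fdiff (negp u) n"
  by (auto simp: fdiff_def posp_def negp_def max_def min_def mult_le_0_iff
      intro: mult_nonpos_nonpos mult_nonneg_nonneg)

lemma posp_mult_negp: "posp u n * negp u n = 0"
  by (simp add: posp_def negp_def max_def min_def)

lemma posp_add_negp: "posp u n + negp u n = u n"
  by (simp add: posp_def negp_def max_def min_def)

lemma fdiff_posp_add_fdiff_negp: "fdiff (posp u) n + fdiff (negp u) n = fdiff u n"
  unfolding fdiff_def using posp_add_negp[of u n] posp_add_negp[of u "n + 1"] by linarith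

lemma abs_fdiff_posp_add_abs_fdiff_negp: "\<bar>fdiff (posp u) n\<bar> + \<bar>fdiff (negp u) n\<bar> = \<bar>fdiff u n\<bar>"
  using fdiff_posp_mult_fdiff_negp_nonneg[of u n] fdiff_posp_add_fdiff_negp[of u n]
  by (auto simp: zero_le_mult_iff abs_if)

lemma abs_posp_add_abs_negp: "\<bar>posp u n\<bar> + \<bar>negp u n\<bar> = \<bar>u n\<bar>"
  by (simp add: posp_def negp_def max_def min_def)

lemma posp_uminus: "posp (\<lambda>n. - u n) = (\<lambda>n. - negp u n)"
  by (rule ext) (simp add: posp_def negp_def max_def min_def)

lemma negp_uminus: "negp (\<lambda>n. - u n) = (\<lambda>n. - posp u n)"
  by (rule ext) (simp add: posp_def negp_def max_def min_def)

lemma posp_nonzero_iff: "posp u \<noteq> (\<lambda>_. 0) \<longleftrightarrow> (\<exists>k. 0 < u k)"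
  by (auto simp: posp_def fun_eq_iff max_def not_le)

lemma negp_nonzero_iff: "negp u \<noteq> (\<lambda>_. 0) \<longleftrightarrow> (\<exists>k. u k < 0)"
  by (force simp: negp_def fun_eq_iff min_def less_le)

lemma dIfun_uminus: "dIfun p q r a b c (\<lambda>n. - w n) (\<lambda>n. - z n) = dIfun p q r a b c w z"
proof -
  have "(\<lambda>n. if - w n = 0 then 0 else c n * \<bar>- w n\<bar> powr (q - 2) * - w n * - z n * ln (\<bar>- w n\<bar> powr r))
      = (\<lambda>n. if w n = 0 then 0 else c n * \<bar>w n\<bar> powr (q - 2) * w n * z n * ln (\<bar>w n\<bar> powr r))"
    by (rule ext) simp
  thus ?thesis
    unfolding dIfun_def fdiff_uminus by simp
qed

definition scale_parts :: "(int \<Rightarrow> real) \<Rightarrow> real \<Rightarrow> real \<Rightarrow> int \<Rightarrow> real" where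
  "scale_parts u s t = (\<lambda>n. s * posp u n + t * negp u n)"

lemma fdiff_scale_parts: "fdiff (scale_parts u s t) n = s * fdiff (posp u) n + t * fdiff (negp u) n"
  unfolding scale_parts_def by (rule fdiff_lin)

lemma posp_scale_parts: "0 < s \<Longrightarrow> 0 < t \<Longrightarrow> posp (scale_parts u s t) = (\<lambda>n. s * posp u n)"
  by (rule ext) (auto simp: scale_parts_def posp_def negp_def max_def min_def mult_le_0_iff zero_le_mult_iff)

lemma scale_parts_1_1: "scale_parts u 1 1 = u"
  by (rule ext) (simp add: scale_parts_def posp_add_negp)

lemma scale_parts_uminus: "scale_parts (\<lambda>n. - u n) t s = (\<lambda>n. - scale_parts u s t n)"
  by (rule ext) (simp add: scale_parts_def posp_uminus negp_uminus)

lemma dIfun_negp_scale_parts: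
  "dIfun p q r a b c (scale_parts u s t) (negp (scale_parts u s t))
     = dIfun p q r a b c (scale_parts (\<lambda>n. - u n) t s) (posp (scale_parts (\<lambda>n. - u n) t s))"
  by (simp add: scale_parts_uminus posp_uminus dIfun_uminus)

definition deform :: "(int \<Rightarrow> real) \<Rightarrow> (int \<Rightarrow> real) \<Rightarrow> real \<Rightarrow> real \<Rightarrow> real \<Rightarrow> int \<Rightarrow> real" where
  "deform u v s t x = (\<lambda>n. scale_parts u s t n - x * v n)"

lemma deform_0: "deform u v s t 0 = scale_parts u s t"
  by (simp add: deform_def)

lemma fdiff_deform:
  "fdiff (deform u v s t x) n = s * fdiff (posp u) n + t * fdiff (negp u) n - x * fdiff v n"
  by (simp add: deform_def scale_parts_def fdiff_def algebra_simps)

lemma deform_sign_changing: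
  assumes k: "0 < u k" and j: "u j < 0" and \<delta>: "0 < \<delta>"
  shows "\<exists>\<epsilon>\<^sub>0>0. \<forall>s t x. \<delta> \<le> s \<longrightarrow> \<delta> \<le> t \<longrightarrow> 0 \<le> x \<longrightarrow> x \<le> \<epsilon>\<^sub>0 \<longrightarrow>
           0 < deform u v s t x k \<and> deform u v s t x j < 0"
proof -
  define m where "m = \<delta> * min (u k) (- u j)"
  have m: "0 < m" "m \<le> \<delta> * u k" "m \<le> \<delta> * (- u j)"
    using \<delta> k j mult_left_mono[of "min (u k) (- u j)" "u k" \<delta>] mult_left_mono[of "min (u k) (- u j)" "- u j" \<delta>]
    unfolding m_def by auto
  define \<epsilon>\<^sub>0 where "\<epsilon>\<^sub>0 = m / (1 + \<bar>v k\<bar> + \<bar>v j\<bar>)"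
  have \<epsilon>\<^sub>0: "0 < \<epsilon>\<^sub>0" "\<epsilon>\<^sub>0 * \<bar>v k\<bar> < m" "\<epsilon>\<^sub>0 * \<bar>v j\<bar> < m"
    using m(1) unfolding \<epsilon>\<^sub>0_def by (simp_all add: field_simps add_pos_nonneg)
  have "0 < deform u v s t x k \<and> deform u v s t x j < 0"
    if s: "\<delta> \<le> s" and t: "\<delta> \<le> t" and x: "0 \<le> x" "x \<le> \<epsilon>\<^sub>0" for s t x
  proof -
    have xv: "\<bar>x * v i\<bar> \<le> \<epsilon>\<^sub>0 * \<bar>v i\<bar>" for i
      using x by (simp add: abs_mult mult_right_mono)
    have "\<delta> * u k \<le> s * u k" "t * u j \<le> \<delta> * u j"
      using s t k j by (simp_all add: mult_right_mono mult_right_mono_neg)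
    moreover have "deform u v s t x k = s * u k - x * v k" "deform u v s t x j = t * u j - x * v j"
      using k j by (simp_all add: deform_def scale_parts_def posp_def negp_def)
    ultimately show ?thesis
      using m \<epsilon>\<^sub>0 abs_le_D1[OF xv[of k]] abs_le_D2[OF xv[of j]] by simp
  qed
  thus ?thesis
    using \<epsilon>\<^sub>0(1) by blast
qed

definition cutoff :: "real \<Rightarrow> real \<times> real \<Rightarrow> real" where
  "cutoff \<rho> \<theta> = max 0 (1 - (\<bar>fst \<theta> - 1\<bar> + \<bar>snd \<theta> - 1\<bar>) / \<rho>)"

lemma cutoff_bounds: "0 < \<rho> \<Longrightarrow> 0 \<le> cutoff \<rho> \<theta> \<and> cutoff \<rho> \<theta> \<le> 1"
  by (auto simp: cutoff_def)

lemma cutoff_1_1: "cutoff \<rho> (1, 1) = 1"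
  by (simp add: cutoff_def)

lemma cutoff_pos_imp:
  assumes "0 < \<rho>" "0 < cutoff \<rho> (s, t)"
  shows "\<bar>s - 1\<bar> < \<rho> \<and> \<bar>t - 1\<bar> < \<rho>"
proof -
  have "(\<bar>s - 1\<bar> + \<bar>t - 1\<bar>) / \<rho> < 1"
    using assms(2) by (simp add: cutoff_def)
  hence "\<bar>s - 1\<bar> + \<bar>t - 1\<bar> < \<rho>"
    using assms(1) by (simp add: divide_less_eq)
  thus ?thesis
    using abs_ge_zero[of "s - 1"] abs_ge_zero[of "t - 1"] by linarith
qed

lemma continuous_on_cutoff: "0 < \<rho> \<Longrightarrow> continuous_on A (cutoff \<rho>)"
  unfolding cutoff_def by (intro continuous_intros) auto

lemma abs_posp_le: "\<bar>posp w n\<bar> \<le> \<bar>w n\<bar>"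
  by (simp add: posp_def)

lemma abs_negp_le: "\<bar>negp w n\<bar> \<le> \<bar>w n\<bar>"
  by (simp add: negp_def)

definition dominated_by :: "(int \<Rightarrow> real) \<Rightarrow> (int \<Rightarrow> real) \<Rightarrow> (int \<Rightarrow> real) \<Rightarrow> bool" where
  "dominated_by u v w \<longleftrightarrow>
     (\<forall>n. \<bar>fdiff w n\<bar> \<le> 2 * (\<bar>fdiff u n\<bar> + \<bar>fdiff v n\<bar>) \<and> \<bar>w n\<bar> \<le> 2 * (\<bar>u n\<bar> + \<bar>v n\<bar>))"

lemma dominated_by_deform:
  assumes "\<bar>s\<bar> \<le> 2" "\<bar>t\<bar> \<le> 2" "\<bar>x\<bar> \<le> 2"
  shows "dominated_by u v (deform u v s t x)"
  unfolding dominated_by_def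
proof
  fix n
  show "\<bar>fdiff (deform u v s t x) n\<bar> \<le> 2 * (\<bar>fdiff u n\<bar> + \<bar>fdiff v n\<bar>) \<and>
      \<bar>deform u v s t x n\<bar> \<le> 2 * (\<bar>u n\<bar> + \<bar>v n\<bar>)"
    using abs_lincomb3_le[OF assms, of "fdiff (posp u) n" "fdiff (negp u) n" "fdiff v n"]
      abs_lincomb3_le[OF assms, of "posp u n" "negp u n" "v n"]
      abs_fdiff_posp_add_abs_fdiff_negp[of u n] abs_posp_add_abs_negp[of u n]
    unfolding fdiff_deform by (simp add: deform_def scale_parts_def)
qed

lemma dominated_by_posp: "dominated_by u v w \<Longrightarrow> dominated_by u v (posp w)"
  unfolding dominated_by_def by (meson order_trans abs_fdiff_posp_le abs_posp_le)

lemma dominated_by_negp: "dominated_by u v w \<Longrightarrow> dominated_by u v (negp w)"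
  unfolding dominated_by_def by (meson order_trans abs_fdiff_negp_le abs_negp_le)

lemma dominated_by_right: "dominated_by u v v"
  by (simp add: dominated_by_def)

section \<open>The logarithmic nonlinearity\<close>

locale log_nonlinearity =
  fixes q r :: real
  assumes q_gt_1: "1 < q" and r_pos: "0 < r"
begin

lemma q_pos: "0 < q"
  using q_gt_1 by simp

definition logf :: "real \<Rightarrow> real" where
  "logf w = (if w = 0 then 0 else \<bar>w\<bar> powr (q - 2) * w * ln (\<bar>w\<bar> powr r))"

definition logH :: "real \<Rightarrow> real" where
  "logH w = (if w = 0 then 0 else \<bar>w\<bar> powr q * ln (\<bar>w\<bar> powr r))"

definition logF :: "real \<Rightarrow> real" where
  "logF w = logH w / q - r / q\<^sup>2 * \<bar>w\<bar> powr q"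

lemma logf_mult_self: "logf w * w = logH w"
proof (cases "w = 0")
  case False
  have "\<bar>w\<bar> powr (q - 2) * w * w = \<bar>w\<bar> powr (q - 2) * \<bar>w\<bar> * \<bar>w\<bar>"
    by (simp add: mult.assoc abs_mult_self_eq)
  also have "\<dots> = \<bar>w\<bar> powr q"
    using False abs_powr_eq_mult[of w q] abs_powr_eq_mult[of w "q - 1"] by simp
  finally show ?thesis
    using False by (simp add: logf_def logH_def algebra_simps)
qed (simp add: logf_def logH_def)

lemma logf_uminus: "logf (- w) = - logf w"
  by (simp add: logf_def)

lemma logH_uminus: "logH (- w) = logH w"
  by (simp add: logH_def)

lemma logF_uminus: "logF (- w) = logF w"
  by (simp add: logF_def logH_uminus)

lemma logH_eq: "logH w = r * (\<bar>w\<bar> * (\<bar>w\<bar> powr (q - 1) * ln \<bar>w\<bar>))"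
  by (cases "w = 0") (simp_all add: logH_def ln_powr abs_powr_eq_mult[of w q])

lemma isCont_logf: "isCont logf x"
proof (cases "x = 0")
  case True
  have "\<forall>\<^sub>F w in at 0. norm (logf w) \<le> r * \<bar>\<bar>w\<bar> powr (q - 1) * ln \<bar>w\<bar>\<bar>"
    unfolding eventually_at_filter
    by (auto simp: logf_def abs_mult ln_powr abs_powr_eq_mult[of _ "q - 1"] r_pos abs_of_pos
        intro!: always_eventually)
  moreover have "((\<lambda>w. r * \<bar>\<bar>w\<bar> powr (q - 1) * ln \<bar>w\<bar>\<bar>) \<longlongrightarrow> 0) (at 0)"
    using tendsto_mult_right_zero[OF tendsto_rabs_zero[OF tendsto_abs_powr_mult_ln_0]] q_gt_1
    by simp
  ultimately have "(logf \<longlongrightarrow> 0) (at 0)"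
    by (rule Lim_null_comparison)
  thus ?thesis
    using True by (simp add: isCont_def logf_def)
next
  case False
  have "\<forall>\<^sub>F w in nhds x. \<bar>w\<bar> powr (q - 2) * w * ln (\<bar>w\<bar> powr r) = logf w"
    using t1_space_nhds[OF False] by eventually_elim (simp add: logf_def)
  moreover have "isCont (\<lambda>w. \<bar>w\<bar> powr (q - 2) * w * ln (\<bar>w\<bar> powr r)) x"
    using False by (intro continuous_intros) auto
  ultimately show ?thesis
    using isCont_cong by fastforce
qed

lemma continuous_on_logf: "continuous_on A logf"
  by (simp add: continuous_at_imp_continuous_on isCont_logf)

lemma continuous_on_logf_comp [continuous_intros]:
  "continuous_on S g \<Longrightarrow> continuous_on S (\<lambda>x. logf (g x))"
  using continuous_on_compose2[OF continuous_on_logf, of S g] by auto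

lemma logF_has_real_derivative_pos:
  assumes w: "0 < w"
  shows "(logF has_real_derivative logf w) (at w)"
proof -
  let ?g = "\<lambda>x::real. x powr q * (r * ln x) / q - r / q\<^sup>2 * x powr q"
  have "(?g has_real_derivative
      ((q * w powr (q - 1)) * (r * ln w) + w powr q * (r * (1 / w))) / q - r / q\<^sup>2 * (q * w powr (q - 1))) (at w)"
    using w q_pos by (intro derivative_eq_intros) auto
  moreover have "((q * w powr (q - 1)) * (r * ln w) + w powr q * (r * (1 / w))) / q
      - r / q\<^sup>2 * (q * w powr (q - 1)) = logf w"
    using w q_pos abs_powr_eq_mult[of w q] abs_powr_eq_mult[of w "q - 1"]
    by (simp add: logf_def ln_powr power2_eq_square field_simps)
  ultimately have "(?g has_real_derivative logf w) (at w)"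
    by simp
  thus ?thesis
    by (rule has_field_derivative_transform_within_open[of _ _ _ "{0<..}"])
       (use w in \<open>auto simp: logF_def logH_def ln_powr\<close>)
qed

lemma logF_has_real_derivative_0: "(logF has_real_derivative logf 0) (at 0)"
proof -
  have "\<forall>\<^sub>F y in at 0. norm ((logF y - logF 0) / (y - 0))
      \<le> r / q * \<bar>\<bar>y\<bar> powr (q - 1) * ln \<bar>y\<bar>\<bar> + r / q\<^sup>2 * \<bar>y\<bar> powr (q - 1)"
  proof (rule eventually_at_filter[THEN iffD2, OF always_eventually], intro allI impI)
    fix y :: real assume "y \<noteq> 0"
    define A B where "A = r / q * (\<bar>y\<bar> powr (q - 1) * ln \<bar>y\<bar>)" and "B = r / q\<^sup>2 * \<bar>y\<bar> powr (q - 1)"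
    have "logF y = \<bar>y\<bar> * (A - B)"
      unfolding logF_def logH_eq A_def B_def abs_powr_eq_mult[OF \<open>y \<noteq> 0\<close>, of q] by (simp add: algebra_simps)
    hence "norm ((logF y - logF 0) / (y - 0)) = \<bar>A - B\<bar>"
      using \<open>y \<noteq> 0\<close> by (simp add: logF_def logH_def abs_mult abs_divide)
    also have "\<dots> \<le> \<bar>A\<bar> + \<bar>B\<bar>"
      by (rule abs_triangle_ineq4)
    finally show "norm ((logF y - logF 0) / (y - 0))
        \<le> r / q * \<bar>\<bar>y\<bar> powr (q - 1) * ln \<bar>y\<bar>\<bar> + r / q\<^sup>2 * \<bar>y\<bar> powr (q - 1)"
      using r_pos q_pos unfolding A_def B_def by (simp add: abs_mult)
  qed
  moreover have "((\<lambda>y. r / q * \<bar>\<bar>y\<bar> powr (q - 1) * ln \<bar>y\<bar>\<bar> + r / q\<^sup>2 * \<bar>y\<bar> powr (q - 1))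
      \<longlongrightarrow> 0) (at 0)"
  proof (rule tendsto_add_zero)
    show "((\<lambda>y. r / q * \<bar>\<bar>y\<bar> powr (q - 1) * ln \<bar>y\<bar>\<bar>) \<longlongrightarrow> 0) (at 0)"
      using q_gt_1 by (intro tendsto_mult_right_zero tendsto_rabs_zero tendsto_abs_powr_mult_ln_0) simp
    show "((\<lambda>y. r / q\<^sup>2 * \<bar>y\<bar> powr (q - 1)) \<longlongrightarrow> 0) (at 0)"
      using q_gt_1 by (auto intro!: tendsto_mult_right_zero tendsto_zero_powrI tendsto_eq_intros)
  qed
  ultimately have "((\<lambda>y. (logF y - logF 0) / (y - 0)) \<longlongrightarrow> 0) (at 0)"
    by (rule Lim_null_comparison)
  thus ?thesis
    by (simp add: has_field_derivative_iff logf_def)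
qed

lemma logF_has_real_derivative: "(logF has_real_derivative logf w) (at w)"
proof -
  consider "w = 0" | "0 < w" | "w < 0"
    by linarith
  thus ?thesis
  proof cases
    case 3
    have "((\<lambda>x. logF (- x)) has_real_derivative logf (- w) * (-1)) (at w)"
      by (rule DERIV_chain2[OF logF_has_real_derivative_pos]) (use 3 in \<open>auto intro!: derivative_eq_intros\<close>)
    thus ?thesis
      by (simp add: logF_uminus logf_uminus)
  qed (simp_all add: logF_has_real_derivative_0 logF_has_real_derivative_pos)
qed

lemma continuous_on_logF: "continuous_on A logF"
  using logF_has_real_derivative DERIV_isCont continuous_at_imp_continuous_on by blast

lemma continuous_on_logH: "continuous_on A logH"
  unfolding logf_mult_self[symmetric] by (intro continuous_intros)

lemma logH_scale: "0 < s \<Longrightarrow> logH (s * w) = s powr q * logH w + r * ln s * s powr q * \<bar>w\<bar> powr q"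
  by (cases "w = 0") (simp_all add: logH_def abs_mult powr_mult ln_mult ln_powr algebra_simps)

lemma logH_scale_le: "0 < s \<Longrightarrow> s \<le> 1 \<Longrightarrow> logH (s * w) \<le> s powr q * logH w"
  using r_pos by (simp add: logH_scale mult_nonneg_nonpos mult_nonpos_nonneg)

lemma logH_scale_ge: "1 \<le> s \<Longrightarrow> s powr q * logH w \<le> logH (s * w)"
  using r_pos by (simp add: logH_scale)

lemma logF_scale_eq:
  assumes "0 < s"
  shows "logF (s * w) - logF w + ((1 - s powr q) / q) * logH w
         = r / q\<^sup>2 * \<bar>w\<bar> powr q * (1 - s powr q + s powr q * ln (s powr q))"
  using assms q_pos
  by (simp add: logF_def logH_scale abs_mult powr_mult ln_powr power2_eq_square field_simps)

lemma logF_scale_nonneg: "0 < s \<Longrightarrow> 0 \<le> logF (s * w) - logF w + ((1 - s powr q) / q) * logH w"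
  unfolding logF_scale_eq using one_minus_add_mult_ln_nonneg[of "s powr q"] r_pos by simp

lemma logF_scale_pos:
  assumes "0 < s" "s \<noteq> 1" "w \<noteq> 0"
  shows "0 < logF (s * w) - logF w + ((1 - s powr q) / q) * logH w"
proof -
  have "s powr q \<noteq> 1"
    using assms q_pos by (simp add: powr_eq_one_iff_gen)
  thus ?thesis
    unfolding logF_scale_eq[OF assms(1)] using one_minus_add_mult_ln_pos[of "s powr q"] assms r_pos
    by simp
qed

end

section \<open>The energy functional for even p\<close>

locale nehari_setting = log_nonlinearity q r for q r :: real +
  fixes p :: real and P :: nat and a b c :: "int \<Rightarrow> real" and b0 :: real
  assumes p_eq: "p = real P" and even_P: "even P" and P_ge_2: "2 \<le> P" and p_less_q: "p < q"
    and a_pos: "\<And>n. 0 < a n" and b_pos: "\<And>n. 0 < b n" and c_pos: "\<And>n. 0 < c n"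
    and b0_pos: "0 < b0" and b0_le_b: "\<And>n. b0 \<le> b n" and c_summable: "c summable_on UNIV"
begin

lemma p_pos: "0 < p"
  using p_eq P_ge_2 by simp

lemma odd_P_minus_1: "odd (P - 1)"
  using even_P P_ge_2 by simp

lemma power_P_minus_1_mult: "x ^ (P - 1) * x = (x::real) ^ P"
  using P_ge_2 by (simp add: power_eq_if[of _ P])

lemma power_P_nonneg: "0 \<le> (x::real) ^ P"
  using even_P by (simp add: zero_le_even_power)

lemma power_P_le: "\<bar>x\<bar> \<le> y \<Longrightarrow> (x::real) ^ P \<le> y ^ P"
  using even_P power_mono[of "\<bar>x\<bar>" y P] by (simp add: power_even_abs)

lemma abs_powr_p: "\<bar>x\<bar> powr p = x ^ P"
  using p_eq P_ge_2 even_P by (cases "x = 0") (simp_all add: powr_realpow power_even_abs)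

lemma abs_powr_p_minus_2_mult: "\<bar>x\<bar> powr (p - 2) * x = x ^ (P - 1)"
proof (cases "x = 0")
  case False
  have "\<bar>x\<bar> powr (p - 2) = \<bar>x\<bar> ^ (P - 2)"
    using False p_eq P_ge_2 by (simp add: powr_realpow[symmetric] of_nat_diff)
  also have "\<dots> = x ^ (P - 2)"
    using even_P P_ge_2 by (simp add: power_even_abs)
  moreover have "x ^ (P - 2) * x = x ^ (P - 1)"
    using P_ge_2 by (metis One_nat_def Suc_diff_Suc Suc_le_lessD numeral_2_eq_2 power_Suc2)
  ultimately show ?thesis
    by simp
qed (use P_ge_2 in simp)

lemma Espace_iff: "w \<in> Espace p a b \<longleftrightarrow>
    (\<lambda>n. a n * fdiff w n ^ P) summable_on UNIV \<and> (\<lambda>n. b n * w n ^ P) summable_on UNIV"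
proof -
  have Eterm: "Eterm p a b w = (\<lambda>n. a n * fdiff w n ^ P + b n * w n ^ P)"
    by (simp add: Eterm_def abs_powr_p fun_eq_iff)
  have nonneg: "0 \<le> a n * fdiff w n ^ P" "0 \<le> b n * w n ^ P" for n
    using a_pos[of n] b_pos[of n] power_P_nonneg by simp_all
  have "w \<in> Espace p a b \<longleftrightarrow> (\<lambda>n. a n * fdiff w n ^ P + b n * w n ^ P) summable_on UNIV"
    by (simp add: Espace_def Eterm)
  also have "\<dots> \<longleftrightarrow> (\<lambda>n. a n * fdiff w n ^ P) summable_on UNIV \<and> (\<lambda>n. b n * w n ^ P) summable_on UNIV"
    using nonneg
    by (auto intro: summable_on_add summable_on_comparison_test[of "\<lambda>n. a n * fdiff w n ^ P + b n * w n ^ P"])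
  finally show ?thesis .
qed

lemma Espace_lin:
  assumes "u \<in> Espace p a b" "v \<in> Espace p a b"
  shows "(\<lambda>n. s * u n + t * v n) \<in> Espace p a b"
proof -
  have dominated: "(\<lambda>n. k n * (s * x n + t * y n) ^ P) summable_on UNIV"
    if k: "\<And>n. 0 < k n" and "(\<lambda>n. k n * x n ^ P) summable_on UNIV" "(\<lambda>n. k n * y n ^ P) summable_on UNIV"
    for k x y :: "int \<Rightarrow> real"
  proof (rule summable_on_comparison_abs)
    show "(\<lambda>n. 2 ^ P * (s ^ P * (k n * x n ^ P) + t ^ P * (k n * y n ^ P))) summable_on UNIV"
      using that by (intro summable_on_cmult_right summable_on_add) auto
    show "\<bar>k n * (s * x n + t * y n) ^ P\<bar> \<le> 2 ^ P * (s ^ P * (k n * x n ^ P) + t ^ P * (k n * y n ^ P))" for n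
      using mult_left_mono[OF even_power_add_le[OF even_P, of "s * x n" "t * y n"], of "k n"] k[of n]
      by (simp add: abs_mult power_P_nonneg power_mult_distrib algebra_simps)
  qed
  show ?thesis
    using assms a_pos b_pos unfolding Espace_iff fdiff_lin by (auto intro!: dominated)
qed

lemma Espace_if_abs_le:
  assumes "u \<in> Espace p a b" "\<And>n. \<bar>fdiff w n\<bar> \<le> \<bar>fdiff u n\<bar>" "\<And>n. \<bar>w n\<bar> \<le> \<bar>u n\<bar>"
  shows "w \<in> Espace p a b"
proof -
  have "\<bar>a n * fdiff w n ^ P\<bar> \<le> a n * fdiff u n ^ P" "\<bar>b n * w n ^ P\<bar> \<le> b n * u n ^ P" for n
    using a_pos[of n] b_pos[of n] power_P_le[OF assms(2)[of n]] power_P_le[OF assms(3)[of n]]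
    by (simp_all add: abs_mult power_P_nonneg power_even_abs[OF even_P])
  thus ?thesis
    using assms(1) unfolding Espace_iff by (auto intro: summable_on_comparison_abs)
qed

lemma Espace_posp: "u \<in> Espace p a b \<Longrightarrow> posp u \<in> Espace p a b"
  using Espace_if_abs_le abs_fdiff_posp_le abs_posp_le by blast

lemma Espace_negp: "u \<in> Espace p a b \<Longrightarrow> negp u \<in> Espace p a b"
  using Espace_if_abs_le abs_fdiff_negp_le abs_negp_le by blast

lemma Espace_scale_parts: "u \<in> Espace p a b \<Longrightarrow> scale_parts u s t \<in> Espace p a b"
  unfolding scale_parts_def by (intro Espace_lin Espace_posp Espace_negp)

lemma Espace_uminus: "u \<in> Espace p a b \<Longrightarrow> (\<lambda>n. - u n) \<in> Espace p a b"
  using Espace_lin[of u u "-1" 0] by simp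

lemma Espace_deform: "u \<in> Espace p a b \<Longrightarrow> v \<in> Espace p a b \<Longrightarrow> deform u v s t x \<in> Espace p a b"
  using Espace_lin[OF Espace_scale_parts, of u v 1 s t "- x"] by (simp add: deform_def)

lemma Espace_bounded:
  assumes "w \<in> Espace p a b"
  shows "\<exists>B. \<forall>n. \<bar>w n\<bar> \<le> B"
proof -
  let ?S = "infsum (\<lambda>n. b n * w n ^ P) UNIV"
  have summable: "(\<lambda>n. b n * w n ^ P) summable_on UNIV"
    using assms by (simp add: Espace_iff)
  have "\<bar>w n\<bar> \<le> max 1 (?S / b0)" for n
  proof (cases "\<bar>w n\<bar> \<le> 1")
    case False
    \<comment> \<open>a single term of the weighted series bounds the corresponding value, since b is bounded below\<close>
    have "\<bar>w n\<bar> \<le> \<bar>w n\<bar> ^ P"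
      using False P_ge_2 by (simp add: power_increasing[of 1 P "\<bar>w n\<bar>", simplified])
    hence "b0 * \<bar>w n\<bar> \<le> b0 * w n ^ P"
      using even_P b0_pos by (simp add: power_even_abs)
    also have "\<dots> \<le> infsum (\<lambda>n. b n * w n ^ P) {n}"
      using b0_le_b[of n] power_P_nonneg by (simp add: mult_right_mono)
    also have "\<dots> \<le> ?S"
      using summable
      by (intro infsum_mono2) (auto intro!: mult_nonneg_nonneg power_P_nonneg less_imp_le[OF b_pos])
    finally show ?thesis
      using b0_pos by (simp add: le_max_iff_disj pos_le_divide_eq mult.commute)
  qed simp
  thus ?thesis
    by blast
qed

definition I_density :: "(int \<Rightarrow> real) \<Rightarrow> int \<Rightarrow> real" where
  "I_density w n = (1/p) * (a n * fdiff w n ^ P + b n * w n ^ P) - c n * logF (w n)"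

definition dI_density :: "(int \<Rightarrow> real) \<Rightarrow> (int \<Rightarrow> real) \<Rightarrow> int \<Rightarrow> real" where
  "dI_density w z n = a n * fdiff w n ^ (P - 1) * fdiff z n + b n * w n ^ (P - 1) * z n
     - c n * (logf (w n) * z n)"

lemma summable_on_c_mult_comp:
  assumes "w \<in> Espace p a b" "continuous_on UNIV g"
  shows "(\<lambda>n. c n * g (w n)) summable_on UNIV"
proof -
  obtain B where "\<forall>n. \<bar>w n\<bar> \<le> B"
    using Espace_bounded[OF assms(1)] by blast
  moreover obtain K where "\<forall>x. \<bar>x\<bar> \<le> B \<longrightarrow> \<bar>g x\<bar> \<le> K"
    using continuous_bounded_on_abs_le[OF assms(2)] by blast
  ultimately show ?thesis
    by (intro summable_on_mult_bounded[OF c_summable]) auto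
qed

lemma Dspace_eq_Espace: "Dspace p q r a b c = Espace p a b"
proof -
  have "logterm q r c w = (\<lambda>n. c n * logH (w n))" for w
    by (simp add: logterm_def logH_def fun_eq_iff)
  thus ?thesis
    unfolding Dspace_def using summable_on_c_mult_comp[OF _ continuous_on_logH] by auto
qed

lemma summable_on_c_mult_logf:
  assumes "w \<in> Espace p a b" "z \<in> Espace p a b"
  shows "(\<lambda>n. c n * (logf (w n) * z n)) summable_on UNIV"
proof -
  obtain B B' where "\<forall>n. \<bar>w n\<bar> \<le> B" "\<forall>n. \<bar>z n\<bar> \<le> B'"
    using Espace_bounded assms by meson
  moreover obtain K where "\<forall>x. \<bar>x\<bar> \<le> B \<longrightarrow> \<bar>logf x\<bar> \<le> K"
    using continuous_bounded_on_abs_le[OF continuous_on_logf] by blast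
  ultimately have "\<bar>logf (w n) * z n\<bar> \<le> K * B'" for n
    by (auto simp: abs_mult intro: mult_mono')
  thus ?thesis
    by (intro summable_on_mult_bounded[OF c_summable])
qed

lemma summable_on_power_pred_mult:
  fixes k x y :: "int \<Rightarrow> real"
  assumes "\<And>n. 0 < k n" "(\<lambda>n. k n * x n ^ P) summable_on UNIV" "(\<lambda>n. k n * y n ^ P) summable_on UNIV"
  shows "(\<lambda>n. k n * x n ^ (P - 1) * y n) summable_on UNIV"
proof (rule summable_on_comparison_abs)
  show "(\<lambda>n. k n * x n ^ P + k n * y n ^ P) summable_on UNIV"
    using assms by (intro summable_on_add)
  show "\<bar>k n * x n ^ (P - 1) * y n\<bar> \<le> k n * x n ^ P + k n * y n ^ P" for n
    using mult_left_mono[OF abs_power_pred_mult_le[OF even_P, of "x n" "y n"], of "k n"] assms(1)[of n] P_ge_2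
    by (simp add: abs_mult algebra_simps)
qed

lemma summable_I_density: "w \<in> Espace p a b \<Longrightarrow> I_density w summable_on UNIV"
  unfolding I_density_def[abs_def] Espace_iff
  by (intro summable_on_diff summable_on_cmult_right summable_on_add summable_on_c_mult_comp
      continuous_on_logF) (auto simp: Espace_iff)

lemma summable_dI_density:
  "w \<in> Espace p a b \<Longrightarrow> z \<in> Espace p a b \<Longrightarrow> dI_density w z summable_on UNIV"
  unfolding dI_density_def[abs_def]
  by (intro summable_on_diff summable_on_add summable_on_power_pred_mult summable_on_c_mult_logf)
     (auto simp: Espace_iff a_pos b_pos)

lemma Ifun_eq_infsum:
  assumes "w \<in> Espace p a b"
  shows "Ifun p q r a b c w = infsum (I_density w) UNIV"
proof -
  have sE: "(\<lambda>n. a n * fdiff w n ^ P + b n * w n ^ P) summable_on UNIV"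
    using assms unfolding Espace_iff by (intro summable_on_add) auto
  have "continuous_on UNIV (\<lambda>x::real. \<bar>x\<bar> powr q)"
    using q_pos by (intro continuous_on_powr' continuous_intros) auto
  hence sq: "(\<lambda>n. c n * \<bar>w n\<bar> powr q) summable_on UNIV"
    using summable_on_c_mult_comp[OF assms] by simp
  have sH: "(\<lambda>n. c n * logH (w n)) summable_on UNIV"
    using summable_on_c_mult_comp[OF assms continuous_on_logH] .
  have "Enorm p a b w powr p = infsum (\<lambda>n. a n * fdiff w n ^ P + b n * w n ^ P) UNIV"
  proof -
    have "0 \<le> infsum (\<lambda>n. a n * fdiff w n ^ P + b n * w n ^ P) UNIV"
      using a_pos b_pos by (intro infsum_nonneg add_nonneg_nonneg mult_nonneg_nonneg power_P_nonneg less_imp_le)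
    thus ?thesis
      using p_pos by (simp add: Enorm_def Eterm_def abs_powr_p powr_powr)
  qed
  moreover have "logterm q r c w = (\<lambda>n. c n * logH (w n))"
    by (simp add: logterm_def logH_def fun_eq_iff)
  moreover have "infsum (I_density w) UNIV = (1/p) * infsum (\<lambda>n. a n * fdiff w n ^ P + b n * w n ^ P) UNIV
      + r / q\<^sup>2 * infsum (\<lambda>n. c n * \<bar>w n\<bar> powr q) UNIV - (1/q) * infsum (\<lambda>n. c n * logH (w n)) UNIV"
  proof -
    have density: "I_density w = (\<lambda>n. ((1/p) * (a n * fdiff w n ^ P + b n * w n ^ P)
        + r / q\<^sup>2 * (c n * \<bar>w n\<bar> powr q)) - (1/q) * (c n * logH (w n)))"
      by (simp add: I_density_def logF_def fun_eq_iff algebra_simps)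
    show ?thesis
      unfolding density
      by (subst infsum_diff, (intro summable_on_add summable_on_cmult_right sE sq sH)+,
          subst infsum_add, (intro summable_on_cmult_right sE sq)+) (simp only: infsum_cmult_right')
  qed
  ultimately show ?thesis
    unfolding Ifun_def by simp
qed

lemma dIfun_eq_infsum:
  assumes "w \<in> Espace p a b" "z \<in> Espace p a b"
  shows "dIfun p q r a b c w z = infsum (dI_density w z) UNIV"
proof -
  have "(\<lambda>n. a n * \<bar>fdiff w n\<bar> powr (p - 2) * fdiff w n * fdiff z n + b n * \<bar>w n\<bar> powr (p - 2) * w n * z n)
      = (\<lambda>n. a n * fdiff w n ^ (P - 1) * fdiff z n + b n * w n ^ (P - 1) * z n)"
  proof -
    have "k * \<bar>y\<bar> powr (p - 2) * y * x = k * y ^ (P - 1) * x" for k x y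
      using abs_powr_p_minus_2_mult[of y] by (metis mult.assoc)
    thus ?thesis
      by (simp only:)
  qed
  moreover have "(\<lambda>n. if w n = 0 then 0 else c n * \<bar>w n\<bar> powr (q - 2) * w n * z n * ln (\<bar>w n\<bar> powr r))
      = (\<lambda>n. c n * (logf (w n) * z n))"
    by (simp add: logf_def fun_eq_iff)
  moreover have "(\<lambda>n. a n * fdiff w n ^ (P - 1) * fdiff z n + b n * w n ^ (P - 1) * z n) summable_on UNIV"
    using assms unfolding Espace_iff
    by (intro summable_on_add summable_on_power_pred_mult) (auto simp: a_pos b_pos)
  ultimately show ?thesis
    unfolding dIfun_def dI_density_def[abs_def]
    by (simp add: infsum_diff summable_on_c_mult_logf[OF assms])
qed

lemma dI_density_add_right:
  "dI_density w z n + dI_density w z' n = dI_density w (\<lambda>m. z m + z' m) n"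
  by (simp add: dI_density_def fdiff_def algebra_simps)

lemma dI_density_self: "dI_density w w n = a n * fdiff w n ^ P + b n * w n ^ P - c n * logH (w n)"
  unfolding dI_density_def mult.assoc power_P_minus_1_mult logf_mult_self ..

lemma dIfun_uminus_right:
  assumes "w \<in> Espace p a b" "z \<in> Espace p a b"
  shows "dIfun p q r a b c w (\<lambda>n. - z n) = - dIfun p q r a b c w z"
proof -
  have "dI_density w (\<lambda>n. - z n) = (\<lambda>n. - dI_density w z n)"
    by (simp add: dI_density_def fdiff_uminus fun_eq_iff algebra_simps)
  thus ?thesis
    using assms Espace_uminus by (simp add: dIfun_eq_infsum infsum_uminus)
qed

section \<open>Rescaling the positive and negative parts\<close>

definition power_gap :: "real \<Rightarrow> real \<Rightarrow> real \<Rightarrow> real \<Rightarrow> real" where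
  "power_gap s t x y = (1/p) * ((x + y) ^ P - (s * x + t * y) ^ P)
     - (1/q) * (x + y) ^ (P - 1) * ((1 - s powr q) * x + (1 - t powr q) * y)"

lemma power_gap_nonneg:
  assumes "0 \<le> x * y" "0 < s" "0 < t"
  shows "0 \<le> power_gap s t x y"
proof -
  have "(p/q) * (x + y) ^ (P - 1) * ((1 - s powr q) * x + (1 - t powr q) * y) \<le> (x + y) ^ P - (s * x + t * y) ^ P"
    using power_scaling_ineq[OF even_P _ _ assms, of q] P_ge_2 p_less_q p_eq by simp
  thus ?thesis
    using p_pos unfolding power_gap_def by (simp add: field_simps)
qed

definition log_gap :: "(int \<Rightarrow> real) \<Rightarrow> real \<Rightarrow> real \<Rightarrow> int \<Rightarrow> real" where
  "log_gap u s t n = logF (scale_parts u s t n) - logF (u n)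
     + ((1 - s powr q) / q) * (logf (u n) * posp u n) + ((1 - t powr q) / q) * (logf (u n) * negp u n)"

lemma log_gap_cases:
  "0 < u n \<Longrightarrow> log_gap u s t n = logF (s * u n) - logF (u n) + ((1 - s powr q) / q) * logH (u n)"
  "u n < 0 \<Longrightarrow> log_gap u s t n = logF (t * u n) - logF (u n) + ((1 - t powr q) / q) * logH (u n)"
  "u n = 0 \<Longrightarrow> log_gap u s t n = 0"
  by (simp_all add: log_gap_def scale_parts_def posp_def negp_def logf_mult_self logF_def logH_def)

lemma log_gap_nonneg:
  assumes "0 < s" "0 < t"
  shows "0 \<le> log_gap u s t n"
proof -
  consider "0 < u n" | "u n < 0" | "u n = 0"
    by linarith
  thus ?thesis
    using logF_scale_nonneg[OF assms(1), of "u n"] logF_scale_nonneg[OF assms(2), of "u n"]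
    by cases (simp_all add: log_gap_cases)
qed

lemma log_gap_pos:
  assumes "0 < s" "0 < t" "(s \<noteq> 1 \<and> 0 < u n) \<or> (t \<noteq> 1 \<and> u n < 0)"
  shows "0 < log_gap u s t n"
  using assms logF_scale_pos[OF assms(1), of "u n"] logF_scale_pos[OF assms(2), of "u n"]
  by (auto simp: log_gap_cases)

definition nehari_gap :: "(int \<Rightarrow> real) \<Rightarrow> real \<Rightarrow> real \<Rightarrow> int \<Rightarrow> real" where
  "nehari_gap u s t n = I_density u n - I_density (scale_parts u s t) n
     - ((1 - s powr q) / q) * dI_density u (posp u) n - ((1 - t powr q) / q) * dI_density u (negp u) n"

lemma nehari_gap_eq:
  "nehari_gap u s t n = a n * power_gap s t (fdiff (posp u) n) (fdiff (negp u) n)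
     + b n * power_gap s t (posp u n) (negp u n) + c n * log_gap u s t n"
  unfolding nehari_gap_def I_density_def dI_density_def power_gap_def log_gap_def fdiff_scale_parts
    fdiff_posp_add_fdiff_negp[of u n, symmetric] posp_add_negp[of u n, symmetric]
  unfolding scale_parts_def
  by (simp add: diff_divide_distrib add_divide_distrib ring_distribs mult_ac)

lemma nehari_gap_nonneg:
  assumes "0 < s" "0 < t"
  shows "0 \<le> nehari_gap u s t n"
proof -
  have "0 \<le> power_gap s t (fdiff (posp u) n) (fdiff (negp u) n)" "0 \<le> power_gap s t (posp u n) (negp u n)"
    using assms by (simp_all add: power_gap_nonneg fdiff_posp_mult_fdiff_negp_nonneg posp_mult_negp)
  thus ?thesis
    unfolding nehari_gap_eq using a_pos[of n] b_pos[of n] c_pos[of n] log_gap_nonneg[OF assms, of u n]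
    by simp
qed

lemma nehari_gap_pos:
  assumes "0 < s" "0 < t" "(s \<noteq> 1 \<and> 0 < u n) \<or> (t \<noteq> 1 \<and> u n < 0)"
  shows "0 < nehari_gap u s t n"
proof -
  have "0 \<le> power_gap s t (fdiff (posp u) n) (fdiff (negp u) n)" "0 \<le> power_gap s t (posp u n) (negp u n)"
    using assms by (simp_all add: power_gap_nonneg fdiff_posp_mult_fdiff_negp_nonneg posp_mult_negp)
  thus ?thesis
    unfolding nehari_gap_eq using a_pos[of n] b_pos[of n] c_pos[of n] log_gap_pos[of s t u n, OF assms]
    by (simp add: add_nonneg_pos)
qed

lemma Ifun_diff_scale_parts_eq:
  assumes u: "u \<in> Espace p a b"
    and nehari: "dIfun p q r a b c u (posp u) = 0" "dIfun p q r a b c u (negp u) = 0"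
  shows "Ifun p q r a b c u - Ifun p q r a b c (scale_parts u s t) = infsum (nehari_gap u s t) UNIV"
proof -
  have Eg: "scale_parts u s t \<in> Espace p a b"
    using Espace_scale_parts[OF u] .
  have s1: "I_density u summable_on UNIV" "I_density (scale_parts u s t) summable_on UNIV"
    using summable_I_density u Eg by auto
  have s2: "dI_density u (posp u) summable_on UNIV" "dI_density u (negp u) summable_on UNIV"
    using summable_dI_density u Espace_posp Espace_negp by auto
  have "infsum (nehari_gap u s t) UNIV = infsum (I_density u) UNIV - infsum (I_density (scale_parts u s t)) UNIV
      - ((1 - s powr q) / q) * infsum (dI_density u (posp u)) UNIV
      - ((1 - t powr q) / q) * infsum (dI_density u (negp u)) UNIV"
    unfolding nehari_gap_def[abs_def]
    by (subst infsum_diff, (intro summable_on_diff summable_on_cmult_right s1 s2)+,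
        subst infsum_diff, (intro summable_on_diff summable_on_cmult_right s1 s2)+,
        subst infsum_diff, (intro summable_on_diff summable_on_cmult_right s1 s2)+)
       (simp only: infsum_cmult_right')
  thus ?thesis
    using nehari u Eg Espace_posp Espace_negp by (simp add: Ifun_eq_infsum dIfun_eq_infsum)
qed

lemma summable_nehari_gap:
  assumes "u \<in> Espace p a b"
  shows "nehari_gap u s t summable_on UNIV"
  unfolding nehari_gap_def[abs_def]
  by (intro summable_on_diff summable_on_cmult_right summable_I_density summable_dI_density
      Espace_scale_parts Espace_posp Espace_negp assms)

lemma Ifun_scale_parts_le:
  assumes "u \<in> Espace p a b" "dIfun p q r a b c u (posp u) = 0" "dIfun p q r a b c u (negp u) = 0"
    and "0 < s" "0 < t"
  shows "Ifun p q r a b c (scale_parts u s t) \<le> Ifun p q r a b c u"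
proof -
  have "0 \<le> infsum (nehari_gap u s t) UNIV"
    using assms(4,5) by (intro infsum_nonneg nehari_gap_nonneg)
  thus ?thesis
    using Ifun_diff_scale_parts_eq[OF assms(1-3), of s t] by linarith
qed

lemma Ifun_scale_parts_less:
  assumes "u \<in> Mset p q r a b c" "0 < s" "0 < t" "(s, t) \<noteq> (1, 1)"
  shows "Ifun p q r a b c (scale_parts u s t) < Ifun p q r a b c u"
proof -
  have u: "u \<in> Espace p a b" "dIfun p q r a b c u (posp u) = 0" "dIfun p q r a b c u (negp u) = 0"
    using assms(1) unfolding Mset_def Dspace_def by simp_all
  have "\<exists>k. 0 < u k" "\<exists>j. u j < 0"
    using assms(1) unfolding Mset_def posp_nonzero_iff[symmetric] negp_nonzero_iff[symmetric] by simp_all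
  hence "\<exists>k. (s \<noteq> 1 \<and> 0 < u k) \<or> (t \<noteq> 1 \<and> u k < 0)"
    using assms(4) by auto
  then obtain k where "0 < nehari_gap u s t k"
    using nehari_gap_pos[OF assms(2,3)] by blast
  hence "0 < infsum (nehari_gap u s t) UNIV"
    by (rule infsum_pos[OF summable_nehari_gap[OF u(1)] nehari_gap_nonneg[OF assms(2,3)]])
  thus ?thesis
    using Ifun_diff_scale_parts_eq[OF u, of s t] by simp
qed

lemma Ifun_nonneg_on_Mset:
  assumes "w \<in> Mset p q r a b c"
  shows "0 \<le> Ifun p q r a b c w"
proof -
  have w: "w \<in> Espace p a b" and nehari: "dIfun p q r a b c w (posp w) = 0" "dIfun p q r a b c w (negp w) = 0"
    using assms unfolding Mset_def Dspace_def by simp_all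
  \<comment> \<open>I(w) = I(w) - (1/q) <I'(w), w> and the latter integrand is nonnegative because p < q\<close>
  have sum: "dI_density w (posp w) n + dI_density w (negp w) n = dI_density w w n" for n
    by (simp add: dI_density_add_right posp_add_negp)
  have eq: "I_density w n - (1/q) * dI_density w (posp w) n - (1/q) * dI_density w (negp w) n
      = (1/p - 1/q) * (a n * fdiff w n ^ P + b n * w n ^ P) + c n * (r / q\<^sup>2 * \<bar>w n\<bar> powr q)" for n
  proof -
    have "I_density w n - (1/q) * dI_density w (posp w) n - (1/q) * dI_density w (negp w) n
        = I_density w n - (1/q) * dI_density w w n"
      unfolding sum[of n, symmetric] by (simp add: algebra_simps)
    thus ?thesis
      by (simp add: I_density_def dI_density_self logF_def algebra_simps)
  qed
  have nonneg: "0 \<le> (1/p - 1/q) * (a n * fdiff w n ^ P + b n * w n ^ P) + c n * (r / q\<^sup>2 * \<bar>w n\<bar> powr q)" for n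
    using p_pos p_less_q a_pos[of n] b_pos[of n] c_pos[of n] r_pos
    by (intro add_nonneg_nonneg mult_nonneg_nonneg) (auto simp: frac_le power_P_nonneg)
  have "0 \<le> infsum (\<lambda>n. I_density w n - (1/q) * dI_density w (posp w) n - (1/q) * dI_density w (negp w) n) UNIV"
    using nonneg by (intro infsum_nonneg) (simp only: eq)
  also have "\<dots> = infsum (I_density w) UNIV - (1/q) * infsum (dI_density w (posp w)) UNIV
      - (1/q) * infsum (dI_density w (negp w)) UNIV"
    using w Espace_posp Espace_negp
    by (subst infsum_diff, (intro summable_on_diff summable_on_cmult_right summable_I_density summable_dI_density; simp)+,
        subst infsum_diff, (intro summable_on_diff summable_on_cmult_right summable_I_density summable_dI_density; simp)+)
       (simp only: infsum_cmult_right')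
  also have "\<dots> = Ifun p q r a b c w"
    using w nehari Espace_posp Espace_negp by (simp add: Ifun_eq_infsum dIfun_eq_infsum)
  finally show ?thesis .
qed

lemma dI_density_scale_parts_posp:
  assumes "0 < s" "0 < t"
  shows "dI_density (scale_parts u s t) (posp (scale_parts u s t)) n
     = s * a n * ((s * fdiff (posp u) n + t * fdiff (negp u) n) ^ (P - 1) * fdiff (posp u) n)
       + s ^ P * (b n * posp u n ^ P) - c n * logH (s * posp u n)"
proof -
  have "scale_parts u s t n ^ (P - 1) * (s * posp u n) = s ^ P * posp u n ^ P \<and>
      logf (scale_parts u s t n) * (s * posp u n) = logH (s * posp u n)"
  proof (cases "0 < u n")
    case True
    hence "scale_parts u s t n = s * posp u n"
      by (simp add: scale_parts_def posp_def negp_def)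
    thus ?thesis
      using power_P_minus_1_mult[of "s * posp u n"] by (simp add: logf_mult_self power_mult_distrib)
  next
    case False
    hence "posp u n = 0"
      by (simp add: posp_def)
    thus ?thesis
      using P_ge_2 by (simp add: logH_def)
  qed
  thus ?thesis
    unfolding dI_density_def posp_scale_parts[OF assms] fdiff_scale_parts fdiff_scale
    by (simp add: algebra_simps)
qed

lemma dI_density_posp:
  "dI_density u (posp u) n = a n * (fdiff u n ^ (P - 1) * fdiff (posp u) n) + b n * posp u n ^ P
     - c n * logH (posp u n)"
  using dI_density_scale_parts_posp[of 1 1 u n] by (simp add: scale_parts_1_1 fdiff_posp_add_fdiff_negp)

lemma power_mult_fdiff_posp_nonneg:
  "0 \<le> s \<Longrightarrow> 0 \<le> t \<Longrightarrow> 0 \<le> (s * fdiff (posp u) n + t * fdiff (negp u) n) ^ (P - 1) * fdiff (posp u) n"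
  by (rule odd_power_pos_combination_mult_nonneg[OF odd_P_minus_1 fdiff_posp_mult_fdiff_negp_nonneg])

lemma summable_b_posp: "u \<in> Espace p a b \<Longrightarrow> (\<lambda>n. b n * posp u n ^ P) summable_on UNIV"
  using Espace_posp by (simp add: Espace_iff)

lemma summable_c_logH_posp: "u \<in> Espace p a b \<Longrightarrow> (\<lambda>n. c n * logH (posp u n)) summable_on UNIV"
  using summable_on_c_mult_comp[OF Espace_posp continuous_on_logH] .

lemma infsum_b_posp_pos:
  assumes "u \<in> Espace p a b" "posp u \<noteq> (\<lambda>_. 0)"
  shows "0 < infsum (\<lambda>n. b n * posp u n ^ P) UNIV"
proof -
  obtain k where "0 < u k"
    using assms(2) posp_nonzero_iff by blast
  hence "0 < b k * posp u k ^ P"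
    using b_pos[of k] by (simp add: posp_def)
  thus ?thesis
    using summable_b_posp[OF assms(1)]
    by (intro infsum_pos) (auto intro!: mult_nonneg_nonneg less_imp_le[OF b_pos] power_P_nonneg)
qed

lemma dIfun_scale_parts_posp_lower:
  assumes u: "u \<in> Espace p a b" and s: "0 < s" "s \<le> 1" and t: "0 < t"
  shows "s ^ P * infsum (\<lambda>n. b n * posp u n ^ P) UNIV - s powr q * infsum (\<lambda>n. c n * logH (posp u n)) UNIV
           \<le> dIfun p q r a b c (scale_parts u s t) (posp (scale_parts u s t))"
proof -
  have "s ^ P * infsum (\<lambda>n. b n * posp u n ^ P) UNIV - s powr q * infsum (\<lambda>n. c n * logH (posp u n)) UNIV
      = infsum (\<lambda>n. s ^ P * (b n * posp u n ^ P) - s powr q * (c n * logH (posp u n))) UNIV"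
    by (rule infsum_scaled_diff[symmetric, OF summable_b_posp[OF u] summable_c_logH_posp[OF u]])
  also have "\<dots> \<le> infsum (dI_density (scale_parts u s t) (posp (scale_parts u s t))) UNIV"
  proof (rule infsum_mono)
    show "(\<lambda>n. s ^ P * (b n * posp u n ^ P) - s powr q * (c n * logH (posp u n))) summable_on UNIV"
      by (intro summable_on_diff summable_on_cmult_right summable_b_posp summable_c_logH_posp u)
    show "dI_density (scale_parts u s t) (posp (scale_parts u s t)) summable_on UNIV"
      by (intro summable_dI_density Espace_posp Espace_scale_parts u)
    fix n
    have "c n * logH (s * posp u n) \<le> c n * (s powr q * logH (posp u n))"
      using logH_scale_le[OF s, of "posp u n"] c_pos[of n] by (intro mult_left_mono) auto
    moreover have "0 \<le> s * a n * ((s * fdiff (posp u) n + t * fdiff (negp u) n) ^ (P - 1) * fdiff (posp u) n)"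
      using s t a_pos[of n] power_mult_fdiff_posp_nonneg[of s t u n] by simp
    ultimately show "s ^ P * (b n * posp u n ^ P) - s powr q * (c n * logH (posp u n))
        \<le> dI_density (scale_parts u s t) (posp (scale_parts u s t)) n"
      unfolding dI_density_scale_parts_posp[OF s(1) t] by (simp add: algebra_simps)
  qed
  also have "\<dots> = dIfun p q r a b c (scale_parts u s t) (posp (scale_parts u s t))"
    using u by (intro dIfun_eq_infsum[symmetric] Espace_posp Espace_scale_parts)
  finally show ?thesis .
qed

lemma dIfun_scale_parts_posp_upper:
  assumes u: "u \<in> Espace p a b" and s: "1 \<le> s" and t: "0 < t" "t \<le> s"
  shows "dIfun p q r a b c (scale_parts u s t) (posp (scale_parts u s t))
           \<le> s ^ P * dIfun p q r a b c u (posp u) - (s powr q - s ^ P) * infsum (\<lambda>n. c n * logH (posp u n)) UNIV"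
proof -
  have s0: "0 < s"
    using s by simp
  have "dIfun p q r a b c (scale_parts u s t) (posp (scale_parts u s t))
      = infsum (dI_density (scale_parts u s t) (posp (scale_parts u s t))) UNIV"
    using u by (intro dIfun_eq_infsum Espace_posp Espace_scale_parts)
  also have "\<dots> \<le> infsum (\<lambda>n. s ^ P * dI_density u (posp u) n - (s powr q - s ^ P) * (c n * logH (posp u n))) UNIV"
  proof (rule infsum_mono)
    show "dI_density (scale_parts u s t) (posp (scale_parts u s t)) summable_on UNIV"
      by (intro summable_dI_density Espace_posp Espace_scale_parts u)
    show "(\<lambda>n. s ^ P * dI_density u (posp u) n - (s powr q - s ^ P) * (c n * logH (posp u n))) summable_on UNIV"
      by (intro summable_on_diff summable_on_cmult_right summable_dI_density summable_c_logH_posp Espace_posp u)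
    fix n
    have "(s * fdiff (posp u) n + t * fdiff (negp u) n) ^ (P - 1) * fdiff (posp u) n
        \<le> s ^ (P - 1) * (fdiff u n ^ (P - 1) * fdiff (posp u) n)"
      using odd_power_pos_combination_mult_le[OF odd_P_minus_1 fdiff_posp_mult_fdiff_negp_nonneg] t
      by (simp add: fdiff_posp_add_fdiff_negp)
    hence "s * a n * ((s * fdiff (posp u) n + t * fdiff (negp u) n) ^ (P - 1) * fdiff (posp u) n)
        \<le> s * a n * (s ^ (P - 1) * (fdiff u n ^ (P - 1) * fdiff (posp u) n))"
      using a_pos[of n] s0 by (intro mult_left_mono) auto
    also have "\<dots> = (s ^ (P - 1) * s) * (a n * (fdiff u n ^ (P - 1) * fdiff (posp u) n))"
      by (simp only: ac_simps)
    also have "\<dots> = s ^ P * (a n * (fdiff u n ^ (P - 1) * fdiff (posp u) n))"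
      by (simp only: power_P_minus_1_mult)
    finally have "s * a n * ((s * fdiff (posp u) n + t * fdiff (negp u) n) ^ (P - 1) * fdiff (posp u) n)
        \<le> s ^ P * (a n * (fdiff u n ^ (P - 1) * fdiff (posp u) n))" .
    moreover have "c n * (s powr q * logH (posp u n)) \<le> c n * logH (s * posp u n)"
      using logH_scale_ge[OF s, of "posp u n"] c_pos[of n] by (intro mult_left_mono) auto
    ultimately show "dI_density (scale_parts u s t) (posp (scale_parts u s t)) n
        \<le> s ^ P * dI_density u (posp u) n - (s powr q - s ^ P) * (c n * logH (posp u n))"
      unfolding dI_density_scale_parts_posp[OF s0 t(1)] unfolding dI_density_posp by (simp add: algebra_simps)
  qed
  also have "\<dots> = s ^ P * dIfun p q r a b c u (posp u) - (s powr q - s ^ P) * infsum (\<lambda>n. c n * logH (posp u n)) UNIV"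
    using u Espace_posp[OF u]
    by (simp add: infsum_scaled_diff summable_dI_density summable_c_logH_posp dIfun_eq_infsum)
  finally show ?thesis .
qed

lemma dIfun_scale_parts_posp_pos:
  assumes u: "u \<in> Espace p a b" and nz: "posp u \<noteq> (\<lambda>_. 0)"
  shows "\<exists>\<delta>>0. \<delta> \<le> 1/2 \<and> (\<forall>s t. 0 < s \<longrightarrow> s \<le> \<delta> \<longrightarrow> 0 < t \<longrightarrow>
           0 < dIfun p q r a b c (scale_parts u s t) (posp (scale_parts u s t)))"
proof -
  define B H where "B = infsum (\<lambda>n. b n * posp u n ^ P) UNIV"
    and "H = infsum (\<lambda>n. c n * logH (posp u n)) UNIV"
  have B: "0 < B"
    unfolding B_def by (rule infsum_b_posp_pos[OF u nz])
  \<comment> \<open>for small s the term s^P B dominates s^q H, since P < q\<close>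
  define \<delta> where "\<delta> = min (1/2) ((B / (\<bar>H\<bar> + 1)) powr (1 / (q - p)))"
  have qp: "0 < q - p"
    using p_less_q by simp
  have \<delta>: "0 < \<delta>" "\<delta> \<le> 1/2"
    unfolding \<delta>_def using B by auto
  have "s powr q * H < s ^ P * B" if s: "0 < s" "s \<le> \<delta>" for s
  proof -
    have "s powr (q - p) \<le> ((B / (\<bar>H\<bar> + 1)) powr (1 / (q - p))) powr (q - p)"
      using s \<delta>_def qp by (intro powr_mono2) auto
    also have "\<dots> = B / (\<bar>H\<bar> + 1)"
      using qp B by (simp add: powr_powr)
    finally have "s powr (q - p) * \<bar>H\<bar> \<le> B / (\<bar>H\<bar> + 1) * \<bar>H\<bar>"
      by (rule mult_right_mono) simp
    also have "\<dots> < B"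
      using B by (simp add: field_simps)
    finally have small: "s powr (q - p) * \<bar>H\<bar> < B" .
    have "s powr q = s ^ P * s powr (q - p)"
      using s p_eq by (simp add: powr_realpow[symmetric] powr_add[symmetric])
    hence "s powr q * H \<le> s ^ P * (s powr (q - p) * \<bar>H\<bar>)"
      using s by (simp add: mult.assoc mult_left_mono)
    also have "\<dots> < s ^ P * B"
      using small s by simp
    finally show ?thesis .
  qed
  moreover have "s ^ P * B - s powr q * H \<le> dIfun p q r a b c (scale_parts u s t) (posp (scale_parts u s t))"
    if "0 < s" "s \<le> \<delta>" "0 < t" for s t
    unfolding B_def H_def using that \<delta> by (intro dIfun_scale_parts_posp_lower u) auto
  ultimately have "0 < dIfun p q r a b c (scale_parts u s t) (posp (scale_parts u s t))"
    if "0 < s" "s \<le> \<delta>" "0 < t" for s t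
    using that by fastforce
  thus ?thesis
    using \<delta> by blast
qed

lemma dIfun_scale_parts_posp_neg:
  assumes u: "u \<in> Espace p a b" and nz: "posp u \<noteq> (\<lambda>_. 0)"
    and nehari: "dIfun p q r a b c u (posp u) = 0" and s: "1 < s" and t: "0 < t" "t \<le> s"
  shows "dIfun p q r a b c (scale_parts u s t) (posp (scale_parts u s t)) < 0"
proof -
  define K where "K n = a n * (fdiff u n ^ (P - 1) * fdiff (posp u) n) + b n * posp u n ^ P" for n
  have "dI_density u (posp u) = (\<lambda>n. K n - c n * logH (posp u n))"
    by (simp add: K_def dI_density_posp fun_eq_iff)
  hence sK: "K summable_on UNIV" and KH: "infsum K UNIV = infsum (\<lambda>n. c n * logH (posp u n)) UNIV"
    using summable_on_add[OF summable_dI_density[OF u Espace_posp[OF u]] summable_c_logH_posp[OF u]]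
      nehari dIfun_eq_infsum[OF u Espace_posp[OF u]] infsum_diff[of K UNIV, OF _ summable_c_logH_posp[OF u]]
    by simp_all
  \<comment> \<open>by the Nehari condition the logarithmic part of the positive part is positive\<close>
  have "b n * posp u n ^ P \<le> K n" for n
    using power_mult_fdiff_posp_nonneg[of 1 1 u n] a_pos[of n]
    by (simp add: K_def fdiff_posp_add_fdiff_negp)
  hence "0 < infsum (\<lambda>n. c n * logH (posp u n)) UNIV"
    using infsum_b_posp_pos[OF u nz] infsum_mono[OF summable_b_posp[OF u] sK] KH by fastforce
  moreover have "s ^ P < s powr q"
    using s p_less_q p_eq by (simp add: powr_realpow[symmetric])
  ultimately have "0 < (s powr q - s ^ P) * infsum (\<lambda>n. c n * logH (posp u n)) UNIV"
    by simp
  moreover have "dIfun p q r a b c (scale_parts u s t) (posp (scale_parts u s t))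
      \<le> - ((s powr q - s ^ P) * infsum (\<lambda>n. c n * logH (posp u n)) UNIV)"
    using dIfun_scale_parts_posp_upper[OF u less_imp_le[OF s] t] nehari by simp
  ultimately show ?thesis
    by linarith
qed

section \<open>Deformation along a direction of descent\<close>

lemma summable_envelope:
  fixes k x y :: "int \<Rightarrow> real"
  assumes "\<And>n. 0 < k n" "(\<lambda>n. k n * x n ^ P) summable_on UNIV" "(\<lambda>n. k n * y n ^ P) summable_on UNIV"
  shows "(\<lambda>n. k n * (2 * (\<bar>x n\<bar> + \<bar>y n\<bar>)) ^ P) summable_on UNIV"
proof (rule summable_on_comparison_abs)
  show "(\<lambda>n. 4 ^ P * (k n * x n ^ P + k n * y n ^ P)) summable_on UNIV"
    using assms by (intro summable_on_cmult_right summable_on_add)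
  fix n
  have "(2 * (\<bar>x n\<bar> + \<bar>y n\<bar>)) ^ P = 2 ^ P * (\<bar>x n\<bar> + \<bar>y n\<bar>) ^ P"
    by (rule power_mult_distrib)
  also have "\<dots> \<le> 2 ^ P * (2 ^ P * (x n ^ P + y n ^ P))"
    using even_power_add_le[OF even_P, of "\<bar>x n\<bar>" "\<bar>y n\<bar>"]
    by (intro mult_left_mono) (simp_all add: power_even_abs[OF even_P])
  also have "\<dots> = 4 ^ P * (x n ^ P + y n ^ P)"
    by (simp flip: power_mult_distrib)
  finally have "k n * (2 * (\<bar>x n\<bar> + \<bar>y n\<bar>)) ^ P \<le> k n * (4 ^ P * (x n ^ P + y n ^ P))"
    using assms(1)[of n] by (intro mult_left_mono) auto
  thus "\<bar>k n * (2 * (\<bar>x n\<bar> + \<bar>y n\<bar>)) ^ P\<bar> \<le> 4 ^ P * (k n * x n ^ P + k n * y n ^ P)"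
    using assms(1)[of n] by (simp add: abs_mult algebra_simps)
qed

lemma abs_dI_density_le:
  assumes "\<bar>fdiff w n\<bar> \<le> \<alpha>" "\<bar>fdiff z n\<bar> \<le> \<alpha>" "\<bar>w n\<bar> \<le> \<beta>" "\<bar>z n\<bar> \<le> \<beta>"
    and "\<bar>logf (w n)\<bar> \<le> K" "\<bar>z n\<bar> \<le> B"
  shows "\<bar>dI_density w z n\<bar> \<le> 2 * (a n * \<alpha> ^ P) + 2 * (b n * \<beta> ^ P) + c n * (K * B)"
proof -
  have "\<bar>fdiff w n ^ (P - 1) * fdiff z n\<bar> \<le> fdiff w n ^ P + fdiff z n ^ P"
    using abs_power_pred_mult_le[OF even_P] P_ge_2 by simp
  also have "\<dots> \<le> 2 * \<alpha> ^ P"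
    using power_P_le[OF assms(1)] power_P_le[OF assms(2)] by linarith
  finally have A: "\<bar>a n * fdiff w n ^ (P - 1) * fdiff z n\<bar> \<le> 2 * (a n * \<alpha> ^ P)"
    using a_pos[of n] mult_left_mono[of _ _ "a n"] by (simp add: abs_mult mult.assoc)
  have "\<bar>w n ^ (P - 1) * z n\<bar> \<le> w n ^ P + z n ^ P"
    using abs_power_pred_mult_le[OF even_P] P_ge_2 by simp
  also have "\<dots> \<le> 2 * \<beta> ^ P"
    using power_P_le[OF assms(3)] power_P_le[OF assms(4)] by linarith
  finally have B: "\<bar>b n * w n ^ (P - 1) * z n\<bar> \<le> 2 * (b n * \<beta> ^ P)"
    using b_pos[of n] mult_left_mono[of _ _ "b n"] by (simp add: abs_mult mult.assoc)
  have "\<bar>logf (w n) * z n\<bar> \<le> K * B"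
    using assms(5,6) by (simp add: abs_mult mult_mono')
  hence C: "\<bar>c n * (logf (w n) * z n)\<bar> \<le> c n * (K * B)"
    using c_pos[of n] by (simp add: abs_mult mult_left_mono)
  have "\<bar>dI_density w z n\<bar> \<le> \<bar>a n * fdiff w n ^ (P - 1) * fdiff z n\<bar> + \<bar>b n * w n ^ (P - 1) * z n\<bar>
      + \<bar>c n * (logf (w n) * z n)\<bar>"
    unfolding dI_density_def by linarith
  thus ?thesis
    using A B C by linarith
qed

lemma dI_density_dominated:
  assumes u: "u \<in> Espace p a b" and v: "v \<in> Espace p a b"
  shows "\<exists>M. M summable_on UNIV \<and>
           (\<forall>w z n. dominated_by u v w \<longrightarrow> dominated_by u v z \<longrightarrow> \<bar>dI_density w z n\<bar> \<le> M n)"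
proof -
  obtain Bu Bv where bounds: "\<forall>n. \<bar>u n\<bar> \<le> Bu" "\<forall>n. \<bar>v n\<bar> \<le> Bv"
    using Espace_bounded u v by meson
  define B where "B = 2 * (Bu + Bv)"
  obtain K where K: "\<forall>x. \<bar>x\<bar> \<le> B \<longrightarrow> \<bar>logf x\<bar> \<le> K"
    using continuous_bounded_on_abs_le[OF continuous_on_logf] by blast
  define \<alpha> \<beta> where "\<alpha> n = 2 * (\<bar>fdiff u n\<bar> + \<bar>fdiff v n\<bar>)" and "\<beta> n = 2 * (\<bar>u n\<bar> + \<bar>v n\<bar>)" for n
  define M where "M n = 2 * (a n * \<alpha> n ^ P) + 2 * (b n * \<beta> n ^ P) + c n * (K * B)" for n
  have "M summable_on UNIV"
    unfolding M_def \<alpha>_def \<beta>_def using u v a_pos b_pos unfolding Espace_iff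
    by (intro summable_on_add summable_on_cmult_right summable_on_cmult_left c_summable summable_envelope) auto
  moreover have "\<bar>dI_density w z n\<bar> \<le> M n" if "dominated_by u v w" "dominated_by u v z" for w z n
  proof -
    have "\<bar>fdiff w n\<bar> \<le> \<alpha> n" "\<bar>fdiff z n\<bar> \<le> \<alpha> n" "\<bar>w n\<bar> \<le> \<beta> n" "\<bar>z n\<bar> \<le> \<beta> n"
      using that unfolding dominated_by_def \<alpha>_def \<beta>_def by auto
    moreover have "\<beta> n \<le> B"
      using bounds unfolding \<beta>_def B_def by (simp add: add_mono)
    ultimately show ?thesis
      unfolding M_def using K by (intro abs_dI_density_le) auto
  qed
  ultimately show ?thesis
    by blast
qed

lemma continuous_on_dI_density:
  assumes "\<And>m. continuous_on S (\<lambda>\<theta>. W \<theta> m)" "\<And>m. continuous_on S (\<lambda>\<theta>. Z \<theta> m)"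
  shows "continuous_on S (\<lambda>\<theta>. dI_density (W \<theta>) (Z \<theta>) n)"
  unfolding dI_density_def fdiff_def by (intro continuous_intros assms)

lemma continuous_on_deform:
  assumes "continuous_on S \<sigma>" "continuous_on S \<tau>" "continuous_on S \<xi>"
  shows "continuous_on S (\<lambda>\<theta>. deform u v (\<sigma> \<theta>) (\<tau> \<theta>) (\<xi> \<theta>) m)"
  unfolding deform_def scale_parts_def by (intro continuous_intros assms)

lemma continuous_on_dIfun_deform:
  fixes S :: "'a::metric_space set"
  assumes u: "u \<in> Espace p a b" and v: "v \<in> Espace p a b"
    and cont: "continuous_on S \<sigma>" "continuous_on S \<tau>" "continuous_on S \<xi>"
    and bound: "\<And>\<theta>. \<theta> \<in> S \<Longrightarrow> \<bar>\<sigma> \<theta>\<bar> \<le> 2 \<and> \<bar>\<tau> \<theta>\<bar> \<le> 2 \<and> \<bar>\<xi> \<theta>\<bar> \<le> 2"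
  shows "continuous_on S (\<lambda>\<theta>.
     (dIfun p q r a b c (deform u v (\<sigma> \<theta>) (\<tau> \<theta>) (\<xi> \<theta>)) (posp (deform u v (\<sigma> \<theta>) (\<tau> \<theta>) (\<xi> \<theta>))),
      dIfun p q r a b c (deform u v (\<sigma> \<theta>) (\<tau> \<theta>) (\<xi> \<theta>)) (negp (deform u v (\<sigma> \<theta>) (\<tau> \<theta>) (\<xi> \<theta>)))))"
    (is "continuous_on S (\<lambda>\<theta>. (dIfun p q r a b c (?W \<theta>) (posp (?W \<theta>)), dIfun p q r a b c (?W \<theta>) (negp (?W \<theta>))))")
proof -
  obtain M where M: "M summable_on UNIV"
    and bd: "\<And>w z n. dominated_by u v w \<Longrightarrow> dominated_by u v z \<Longrightarrow> \<bar>dI_density w z n\<bar> \<le> M n"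
    using dI_density_dominated[OF u v] by blast
  have dom: "dominated_by u v (?W \<theta>)" if "\<theta> \<in> S" for \<theta>
    using bound[OF that] by (intro dominated_by_deform) auto
  have cW: "continuous_on S (\<lambda>\<theta>. ?W \<theta> m)" for m
    using cont by (rule continuous_on_deform)
  have EW: "?W \<theta> \<in> Espace p a b" for \<theta>
    using Espace_deform[OF u v] .
  have "continuous_on S (\<lambda>\<theta>. infsum (\<lambda>n. dI_density (?W \<theta>) (posp (?W \<theta>)) n) UNIV)"
  proof (rule continuous_on_infsum_dominated[OF M, where f = "\<lambda>n \<theta>. dI_density (?W \<theta>) (posp (?W \<theta>)) n"])
    show "\<bar>dI_density (?W \<theta>) (posp (?W \<theta>)) n\<bar> \<le> M n" if "\<theta> \<in> S" for n \<theta>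
      using bd dom[OF that] dominated_by_posp by blast
    show "continuous_on S (\<lambda>\<theta>. dI_density (?W \<theta>) (posp (?W \<theta>)) n)" for n
      unfolding posp_def by (intro continuous_on_dI_density continuous_intros cW)
  qed
  moreover have "continuous_on S (\<lambda>\<theta>. infsum (\<lambda>n. dI_density (?W \<theta>) (negp (?W \<theta>)) n) UNIV)"
  proof (rule continuous_on_infsum_dominated[OF M, where f = "\<lambda>n \<theta>. dI_density (?W \<theta>) (negp (?W \<theta>)) n"])
    show "\<bar>dI_density (?W \<theta>) (negp (?W \<theta>)) n\<bar> \<le> M n" if "\<theta> \<in> S" for n \<theta>
      using bd dom[OF that] dominated_by_negp by blast
    show "continuous_on S (\<lambda>\<theta>. dI_density (?W \<theta>) (negp (?W \<theta>)) n)" for n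
      unfolding negp_def by (intro continuous_on_dI_density continuous_intros cW)
  qed
  ultimately show ?thesis
    using EW Espace_posp Espace_negp by (simp add: dIfun_eq_infsum continuous_on_Pair)
qed

lemma I_density_deform_has_real_derivative:
  "((\<lambda>x. I_density (deform u v s t x) n) has_real_derivative - dI_density (deform u v s t x) v n) (at x)"
proof -
  define A C where "A = s * fdiff (posp u) n + t * fdiff (negp u) n" and "C = s * posp u n + t * negp u n"
  have "(\<lambda>x. I_density (deform u v s t x) n)
      = (\<lambda>x. (1/p) * (a n * (A - x * fdiff v n) ^ P + b n * (C - x * v n) ^ P) - c n * logF (C - x * v n))"
    unfolding I_density_def fdiff_deform by (simp add: fun_eq_iff deform_def scale_parts_def A_def C_def)
  moreover have "- dI_density (deform u v s t x) v n
      = (1/p) * (a n * (real P * (A - x * fdiff v n) ^ (P - 1) * (- fdiff v n))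
          + b n * (real P * (C - x * v n) ^ (P - 1) * (- v n))) - c n * (logf (C - x * v n) * (- v n))"
    using p_eq P_ge_2 unfolding dI_density_def fdiff_deform
    by (simp add: deform_def scale_parts_def A_def C_def field_simps)
  moreover have "((\<lambda>x. logF (C - x * v n)) has_real_derivative logf (C - x * v n) * (- v n)) (at x)"
    by (rule DERIV_chain2[OF logF_has_real_derivative]) (auto intro!: derivative_eq_intros)
  ultimately show ?thesis
    using p_pos by (auto intro!: derivative_eq_intros)
qed

lemma infsum_dI_density_deform_near:
  assumes u: "u \<in> Espace p a b" and v: "v \<in> Espace p a b" and d: "0 < dIfun p q r a b c u v"
  shows "\<exists>\<rho>>0. \<forall>s t \<xi>. \<bar>s - 1\<bar> < \<rho> \<longrightarrow> \<bar>t - 1\<bar> < \<rho> \<longrightarrow> (\<forall>n. \<bar>\<xi> n\<bar> < \<rho>) \<longrightarrow>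
     dIfun p q r a b c u v / 2 \<le> infsum (\<lambda>n. dI_density (deform u v s t (\<xi> n)) v n) UNIV"
proof -
  define K where "K = cball ((1::real), (1::real), (0::real)) 1"
  define f where "f n \<theta> = dI_density (deform u v (fst \<theta>) (fst (snd \<theta>)) (snd (snd \<theta>))) v n" for n \<theta>
  obtain M where M: "M summable_on UNIV"
    and bd: "\<And>w z n. dominated_by u v w \<Longrightarrow> dominated_by u v z \<Longrightarrow> \<bar>dI_density w z n\<bar> \<le> M n"
    using dI_density_dominated[OF u v] by blast
  have K_bound: "\<bar>fst \<theta>\<bar> \<le> 2 \<and> \<bar>fst (snd \<theta>)\<bar> \<le> 2 \<and> \<bar>snd (snd \<theta>)\<bar> \<le> 2" if "\<theta> \<in> K" for \<theta>
  proof -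
    have "dist \<theta> (1, 1, 0) \<le> 1"
      using that unfolding K_def by (simp add: dist_commute)
    hence "dist (fst \<theta>) 1 \<le> 1" "dist (fst (snd \<theta>)) 1 \<le> 1" "dist (snd (snd \<theta>)) 0 \<le> 1"
      using dist_fst_le[of \<theta> "(1, 1, 0)"] dist_snd_le[of \<theta> "(1, 1, 0)"]
        dist_fst_le[of "snd \<theta>" "(1, 0)"] dist_snd_le[of "snd \<theta>" "(1, 0)"] by auto
    thus ?thesis
      by (auto simp: dist_real_def)
  qed
  have f_bound: "\<bar>f n \<theta>\<bar> \<le> M n" if "\<theta> \<in> K" for n \<theta>
    unfolding f_def using K_bound[OF that] by (intro bd dominated_by_deform dominated_by_right) auto
  have f_cont: "continuous_on K (f n)" for n
    unfolding f_def[abs_def]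
    by (intro continuous_on_dI_density continuous_on_deform continuous_intros)
  have center: "infsum (\<lambda>n. f n (1, 1, 0)) UNIV = dIfun p q r a b c u v"
    using dIfun_eq_infsum[OF u v] by (simp add: f_def deform_0 scale_parts_1_1)
  obtain \<epsilon> where \<epsilon>: "\<epsilon> > 0" and close: "\<forall>g. (\<forall>n. g n \<in> K \<and> dist (g n) (1, 1, 0) < \<epsilon>) \<longrightarrow>
      \<bar>infsum (\<lambda>n. f n (g n)) UNIV - infsum (\<lambda>n. f n (1, 1, 0)) UNIV\<bar> \<le> dIfun p q r a b c u v / 2"
    using dominated_infsum_close[OF M f_bound f_cont, of "(1, 1, 0)" "dIfun p q r a b c u v / 2"] d
    unfolding K_def by auto
  have near: "(s, t, y) \<in> K \<and> dist (s, t, y) (1, 1, 0) < \<epsilon>"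
    if "\<bar>s - 1\<bar> < min \<epsilon> 1 / 3" "\<bar>t - 1\<bar> < min \<epsilon> 1 / 3" "\<bar>y\<bar> < min \<epsilon> 1 / 3" for s t y
  proof -
    have "dist (s, t, y) (1, 1, 0) \<le> dist s 1 + (dist t 1 + dist y 0)"
      using dist_Pair_le_add[of s "(t, y)" 1 "(1, 0)"] dist_Pair_le_add[of t y 1 0] by linarith
    also have "\<dots> < min \<epsilon> 1"
      using that by (simp add: dist_real_def)
    finally show ?thesis
      unfolding K_def by (simp add: dist_commute)
  qed
  have "dIfun p q r a b c u v / 2 \<le> infsum (\<lambda>n. f n (s, t, \<xi> n)) UNIV"
    if "\<bar>s - 1\<bar> < min \<epsilon> 1 / 3" "\<bar>t - 1\<bar> < min \<epsilon> 1 / 3" "\<forall>n. \<bar>\<xi> n\<bar> < min \<epsilon> 1 / 3" for s t \<xi>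
  proof -
    have "\<bar>infsum (\<lambda>n. f n (s, t, \<xi> n)) UNIV - infsum (\<lambda>n. f n (1, 1, 0)) UNIV\<bar> \<le> dIfun p q r a b c u v / 2"
      by (rule close[rule_format]) (use near[OF that(1,2)] that(3) in blast)
    thus ?thesis
      unfolding center by linarith
  qed
  thus ?thesis
    using \<epsilon> by (intro exI[of _ "min \<epsilon> 1 / 3"]) (auto simp: f_def)
qed

lemma Ifun_deform_le:
  assumes u: "u \<in> Espace p a b" and v: "v \<in> Espace p a b" and d: "0 < dIfun p q r a b c u v"
  shows "\<exists>\<rho>>0. \<forall>s t x. \<bar>s - 1\<bar> < \<rho> \<longrightarrow> \<bar>t - 1\<bar> < \<rho> \<longrightarrow> 0 \<le> x \<longrightarrow> x < \<rho> \<longrightarrow>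
     Ifun p q r a b c (deform u v s t x) \<le> Ifun p q r a b c (scale_parts u s t) - x * (dIfun p q r a b c u v / 2)"
proof -
  obtain \<rho> where \<rho>: "0 < \<rho>" and near: "\<And>s t \<xi>. \<bar>s - 1\<bar> < \<rho> \<Longrightarrow> \<bar>t - 1\<bar> < \<rho> \<Longrightarrow> (\<forall>n. \<bar>\<xi> n\<bar> < \<rho>) \<Longrightarrow>
      dIfun p q r a b c u v / 2 \<le> infsum (\<lambda>n. dI_density (deform u v s t (\<xi> n)) v n) UNIV"
    using infsum_dI_density_deform_near[OF u v d] by blast
  have "Ifun p q r a b c (deform u v s t x) \<le> Ifun p q r a b c (scale_parts u s t) - x * (dIfun p q r a b c u v / 2)"
    if s: "\<bar>s - 1\<bar> < \<rho>" and t: "\<bar>t - 1\<bar> < \<rho>" and x: "0 < x" "x < \<rho>" for s t x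
  proof -
    \<comment> \<open>the intermediate points of the mean value theorem depend on n, hence the varying \<xi> n above\<close>
    have "\<forall>n. \<exists>\<xi>. 0 < \<xi> \<and> \<xi> < x \<and> I_density (deform u v s t x) n - I_density (deform u v s t 0) n
        = (x - 0) * - dI_density (deform u v s t \<xi>) v n"
      using MVT2[OF x(1), of "\<lambda>y. I_density (deform u v s t y) n" "\<lambda>y. - dI_density (deform u v s t y) v n" for n]
        I_density_deform_has_real_derivative by simp
    then obtain \<xi> where \<xi>: "\<And>n. 0 < \<xi> n \<and> \<xi> n < x"
      and mvt: "\<And>n. I_density (deform u v s t x) n - I_density (deform u v s t 0) n
        = - x * dI_density (deform u v s t (\<xi> n)) v n"
      by (metis diff_zero mult_minus_right mult_minus_left)
    have "Ifun p q r a b c (deform u v s t x) - Ifun p q r a b c (deform u v s t 0)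
        = infsum (\<lambda>n. I_density (deform u v s t x) n - I_density (deform u v s t 0) n) UNIV"
      using u v by (simp add: Ifun_eq_infsum Espace_deform infsum_diff summable_I_density)
    also have "\<dots> = - x * infsum (\<lambda>n. dI_density (deform u v s t (\<xi> n)) v n) UNIV"
      unfolding mvt by (rule infsum_cmult_right')
    also have "\<dots> \<le> - x * (dIfun p q r a b c u v / 2)"
    proof -
      have "\<forall>n. \<bar>\<xi> n\<bar> < \<rho>"
        using \<xi> x by (metis abs_of_pos order.strict_trans)
      thus ?thesis
        using near[OF s t] x by simp
    qed
    finally show ?thesis
      by (simp add: deform_0)
  qed
  thus ?thesis
    using \<rho> by (intro exI[of _ \<rho>]) (auto simp: deform_0 le_less)
qed

section \<open>Minimizers on the Nehari set are critical points\<close>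

lemma scale_parts_boundary_signs:
  assumes u: "u \<in> Mset p q r a b c"
  shows "\<exists>\<delta>>0. \<delta> \<le> 1/2 \<and>
    (\<forall>t. 0 < t \<longrightarrow> t \<le> 2 \<longrightarrow> 0 < dIfun p q r a b c (scale_parts u \<delta> t) (posp (scale_parts u \<delta> t))
                        \<and> dIfun p q r a b c (scale_parts u 2 t) (posp (scale_parts u 2 t)) < 0) \<and>
    (\<forall>s. 0 < s \<longrightarrow> s \<le> 2 \<longrightarrow> 0 < dIfun p q r a b c (scale_parts u s \<delta>) (negp (scale_parts u s \<delta>))
                        \<and> dIfun p q r a b c (scale_parts u s 2) (negp (scale_parts u s 2)) < 0)"
proof -
  let ?u' = "\<lambda>n. - u n"
  have uE: "u \<in> Espace p a b" and u'E: "?u' \<in> Espace p a b"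
    and nehari: "dIfun p q r a b c u (posp u) = 0" "dIfun p q r a b c ?u' (posp ?u') = 0"
    and nz: "posp u \<noteq> (\<lambda>_. 0)" "posp ?u' \<noteq> (\<lambda>_. 0)"
    using u Espace_uminus negp_nonzero_iff[of u] posp_nonzero_iff[of ?u']
    by (auto simp: Mset_def Dspace_eq_Espace posp_uminus dIfun_uminus)
  \<comment> \<open>the negative part of u is the positive part of -u, with the roles of s and t swapped\<close>
  obtain \<delta>\<^sub>1 where \<delta>\<^sub>1: "0 < \<delta>\<^sub>1" "\<delta>\<^sub>1 \<le> 1/2" "\<And>s t. 0 < s \<Longrightarrow> s \<le> \<delta>\<^sub>1 \<Longrightarrow> 0 < t \<Longrightarrow>
      0 < dIfun p q r a b c (scale_parts u s t) (posp (scale_parts u s t))"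
    using dIfun_scale_parts_posp_pos[OF uE nz(1)] by blast
  obtain \<delta>\<^sub>2 where \<delta>\<^sub>2: "0 < \<delta>\<^sub>2" "\<delta>\<^sub>2 \<le> 1/2" "\<And>s t. 0 < s \<Longrightarrow> s \<le> \<delta>\<^sub>2 \<Longrightarrow> 0 < t \<Longrightarrow>
      0 < dIfun p q r a b c (scale_parts ?u' s t) (posp (scale_parts ?u' s t))"
    using dIfun_scale_parts_posp_pos[OF u'E nz(2)] by blast
  define \<delta> where "\<delta> = min \<delta>\<^sub>1 \<delta>\<^sub>2"
  have \<delta>: "0 < \<delta>" "\<delta> \<le> \<delta>\<^sub>1" "\<delta> \<le> \<delta>\<^sub>2" "\<delta> \<le> 1/2"
    using \<delta>\<^sub>1 \<delta>\<^sub>2 unfolding \<delta>_def by auto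
  show ?thesis
    using \<delta> \<delta>\<^sub>1(3)[of \<delta>] \<delta>\<^sub>2(3)[of \<delta>] dIfun_scale_parts_posp_neg[OF uE nz(1) nehari(1), of 2]
      dIfun_scale_parts_posp_neg[OF u'E nz(2) nehari(2), of 2]
    by (intro exI[of _ \<delta>]) (auto simp: dIfun_negp_scale_parts)
qed

lemma deform_cutoff_nehari_zero:
  assumes u: "u \<in> Mset p q r a b c" and v: "v \<in> Espace p a b"
  shows "\<exists>\<delta>>0. \<forall>\<epsilon> \<rho>. 0 \<le> \<epsilon> \<longrightarrow> \<epsilon> \<le> 1 \<longrightarrow> 0 < \<rho> \<longrightarrow> \<rho> \<le> 1/2 \<longrightarrow> (\<exists>s t. \<delta> \<le> s \<and> \<delta> \<le> t \<and>
     dIfun p q r a b c (deform u v s t (\<epsilon> * cutoff \<rho> (s, t))) (posp (deform u v s t (\<epsilon> * cutoff \<rho> (s, t)))) = 0 \<and>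
     dIfun p q r a b c (deform u v s t (\<epsilon> * cutoff \<rho> (s, t))) (negp (deform u v s t (\<epsilon> * cutoff \<rho> (s, t)))) = 0)"
proof -
  have uE: "u \<in> Espace p a b"
    using u by (simp add: Mset_def Dspace_eq_Espace)
  obtain \<delta> where \<delta>: "0 < \<delta>" "\<delta> \<le> 1/2"
    and pos_side: "\<And>t. 0 < t \<Longrightarrow> t \<le> 2 \<Longrightarrow> 0 < dIfun p q r a b c (scale_parts u \<delta> t) (posp (scale_parts u \<delta> t))
                        \<and> dIfun p q r a b c (scale_parts u 2 t) (posp (scale_parts u 2 t)) < 0"
    and neg_side: "\<And>s. 0 < s \<Longrightarrow> s \<le> 2 \<Longrightarrow> 0 < dIfun p q r a b c (scale_parts u s \<delta>) (negp (scale_parts u s \<delta>))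
                        \<and> dIfun p q r a b c (scale_parts u s 2) (negp (scale_parts u s 2)) < 0"
    using scale_parts_boundary_signs[OF u] by blast
  have "\<exists>s t. \<delta> \<le> s \<and> \<delta> \<le> t \<and>
     dIfun p q r a b c (deform u v s t (\<epsilon> * cutoff \<rho> (s, t))) (posp (deform u v s t (\<epsilon> * cutoff \<rho> (s, t)))) = 0 \<and>
     dIfun p q r a b c (deform u v s t (\<epsilon> * cutoff \<rho> (s, t))) (negp (deform u v s t (\<epsilon> * cutoff \<rho> (s, t)))) = 0"
    if \<epsilon>: "0 \<le> \<epsilon>" "\<epsilon> \<le> 1" and \<rho>: "0 < \<rho>" "\<rho> \<le> 1/2" for \<epsilon> \<rho>
  proof -
    define h where "h \<theta> = deform u v (fst \<theta>) (snd \<theta>) (\<epsilon> * cutoff \<rho> \<theta>)" for \<theta>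
    define F where "F \<theta> = (dIfun p q r a b c (h \<theta>) (posp (h \<theta>)), dIfun p q r a b c (h \<theta>) (negp (h \<theta>)))" for \<theta>
    have x_bounds: "0 \<le> \<epsilon> * cutoff \<rho> \<theta>" "\<epsilon> * cutoff \<rho> \<theta> \<le> 1" for \<theta>
      using cutoff_bounds[OF \<rho>(1), of \<theta>] \<epsilon> by (auto intro: mult_le_one)
    \<comment> \<open>on the boundary of the square the cutoff vanishes, leaving the pure rescalings\<close>
    have boundary: "h (s, t) = scale_parts u s t" if "1/2 \<le> \<bar>s - 1\<bar> \<or> 1/2 \<le> \<bar>t - 1\<bar>" for s t
    proof -
      have "cutoff \<rho> (s, t) = 0"
        using that \<rho> cutoff_pos_imp[OF \<rho>(1), of s t] cutoff_bounds[OF \<rho>(1), of "(s, t)"] by fastforce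
      thus ?thesis
        by (simp add: h_def deform_0)
    qed
    have "\<exists>s t. \<delta> \<le> s \<and> s \<le> 2 \<and> \<delta> \<le> t \<and> t \<le> 2 \<and> F (s, t) = (0, 0)"
    proof (rule poincare_miranda_square)
      show "continuous_on ({\<delta>..2} \<times> {\<delta>..2}) F"
        unfolding F_def h_def using \<delta> x_bounds(1) order_trans[OF x_bounds(2), of 2]
        by (intro continuous_on_dIfun_deform uE v continuous_intros continuous_on_cutoff \<rho>(1)) auto
    qed (use \<delta> boundary pos_side neg_side in \<open>auto simp: F_def\<close>)
    thus ?thesis
      unfolding F_def h_def by auto
  qed
  thus ?thesis
    using \<delta>(1) by blast
qed

lemma deform_cutoff_meets_Mset:
  assumes u: "u \<in> Mset p q r a b c" and v: "v \<in> Espace p a b"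
  shows "\<exists>\<delta> \<epsilon>\<^sub>0. 0 < \<delta> \<and> 0 < \<epsilon>\<^sub>0 \<and> (\<forall>\<epsilon> \<rho>. 0 \<le> \<epsilon> \<longrightarrow> \<epsilon> \<le> \<epsilon>\<^sub>0 \<longrightarrow> 0 < \<rho> \<longrightarrow> \<rho> \<le> 1/2 \<longrightarrow>
           (\<exists>s t. \<delta> \<le> s \<and> \<delta> \<le> t \<and> deform u v s t (\<epsilon> * cutoff \<rho> (s, t)) \<in> Mset p q r a b c))"
proof -
  obtain \<delta> where \<delta>: "0 < \<delta>" and zero: "\<And>\<epsilon> \<rho>. 0 \<le> \<epsilon> \<Longrightarrow> \<epsilon> \<le> 1 \<Longrightarrow> 0 < \<rho> \<Longrightarrow> \<rho> \<le> 1/2 \<Longrightarrow>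
     \<exists>s t. \<delta> \<le> s \<and> \<delta> \<le> t \<and>
     dIfun p q r a b c (deform u v s t (\<epsilon> * cutoff \<rho> (s, t))) (posp (deform u v s t (\<epsilon> * cutoff \<rho> (s, t)))) = 0 \<and>
     dIfun p q r a b c (deform u v s t (\<epsilon> * cutoff \<rho> (s, t))) (negp (deform u v s t (\<epsilon> * cutoff \<rho> (s, t)))) = 0"
    using deform_cutoff_nehari_zero[OF u v] by blast
  obtain k j where "0 < u k" "u j < 0"
    using u by (auto simp: Mset_def posp_nonzero_iff negp_nonzero_iff)
  then obtain \<epsilon>\<^sub>1 where \<epsilon>\<^sub>1: "0 < \<epsilon>\<^sub>1" and signs: "\<And>s t x. \<delta> \<le> s \<Longrightarrow> \<delta> \<le> t \<Longrightarrow> 0 \<le> x \<Longrightarrow> x \<le> \<epsilon>\<^sub>1 \<Longrightarrow>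
      0 < deform u v s t x k \<and> deform u v s t x j < 0"
    using deform_sign_changing[OF _ _ \<delta>, of u k j v] by blast
  have "\<exists>s t. \<delta> \<le> s \<and> \<delta> \<le> t \<and> deform u v s t (\<epsilon> * cutoff \<rho> (s, t)) \<in> Mset p q r a b c"
    if \<epsilon>: "0 \<le> \<epsilon>" "\<epsilon> \<le> min 1 \<epsilon>\<^sub>1" and \<rho>: "0 < \<rho>" "\<rho> \<le> 1/2" for \<epsilon> \<rho>
  proof -
    have x: "0 \<le> \<epsilon> * cutoff \<rho> \<theta>" "\<epsilon> * cutoff \<rho> \<theta> \<le> \<epsilon>" for \<theta>
      using cutoff_bounds[OF \<rho>(1), of \<theta>] \<epsilon> by (auto intro: mult_left_le)
    obtain s t where st: "\<delta> \<le> s" "\<delta> \<le> t" and nehari: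
      "dIfun p q r a b c (deform u v s t (\<epsilon> * cutoff \<rho> (s, t))) (posp (deform u v s t (\<epsilon> * cutoff \<rho> (s, t)))) = 0"
      "dIfun p q r a b c (deform u v s t (\<epsilon> * cutoff \<rho> (s, t))) (negp (deform u v s t (\<epsilon> * cutoff \<rho> (s, t)))) = 0"
      using zero[OF \<epsilon>(1) _ \<rho>] \<epsilon>(2) by auto
    moreover have "\<epsilon> * cutoff \<rho> (s, t) \<le> \<epsilon>\<^sub>1"
      using x(2)[of "(s, t)"] \<epsilon>(2) by simp
    hence "0 < deform u v s t (\<epsilon> * cutoff \<rho> (s, t)) k" "deform u v s t (\<epsilon> * cutoff \<rho> (s, t)) j < 0"
      using signs[OF st x(1)] by auto
    ultimately show ?thesis
      using Espace_deform[OF _ v, of u] u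
      by (auto simp: Mset_def Dspace_eq_Espace posp_nonzero_iff negp_nonzero_iff)
  qed
  thus ?thesis
    using \<delta> \<epsilon>\<^sub>1 by (intro exI[of _ \<delta>] exI[of _ "min 1 \<epsilon>\<^sub>1"]) auto
qed

lemma exists_Mset_below_if_dIfun_pos:
  assumes u: "u \<in> Mset p q r a b c" and v: "v \<in> Espace p a b" and d: "0 < dIfun p q r a b c u v"
  shows "\<exists>w \<in> Mset p q r a b c. Ifun p q r a b c w < Ifun p q r a b c u"
proof -
  have uE: "u \<in> Espace p a b" and nehari: "dIfun p q r a b c u (posp u) = 0" "dIfun p q r a b c u (negp u) = 0"
    using u by (simp_all add: Mset_def Dspace_eq_Espace)
  obtain \<rho>\<^sub>0 where \<rho>\<^sub>0: "0 < \<rho>\<^sub>0" and descent: "\<And>s t x. \<bar>s - 1\<bar> < \<rho>\<^sub>0 \<Longrightarrow> \<bar>t - 1\<bar> < \<rho>\<^sub>0 \<Longrightarrow> 0 \<le> x \<Longrightarrow> x < \<rho>\<^sub>0 \<Longrightarrow>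
      Ifun p q r a b c (deform u v s t x) \<le> Ifun p q r a b c (scale_parts u s t) - x * (dIfun p q r a b c u v / 2)"
    using Ifun_deform_le[OF uE v d] by blast
  obtain \<delta> \<epsilon>\<^sub>0 where \<delta>: "0 < \<delta>" and \<epsilon>\<^sub>0: "0 < \<epsilon>\<^sub>0" and meets: "\<And>\<epsilon> \<rho>. 0 \<le> \<epsilon> \<Longrightarrow> \<epsilon> \<le> \<epsilon>\<^sub>0 \<Longrightarrow> 0 < \<rho> \<Longrightarrow> \<rho> \<le> 1/2 \<Longrightarrow>
      \<exists>s t. \<delta> \<le> s \<and> \<delta> \<le> t \<and> deform u v s t (\<epsilon> * cutoff \<rho> (s, t)) \<in> Mset p q r a b c"
    using deform_cutoff_meets_Mset[OF u v] by blast
  define \<rho> \<epsilon> where "\<rho> = min \<rho>\<^sub>0 (1/2)" and "\<epsilon> = min \<epsilon>\<^sub>0 (\<rho> / 2)"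
  have \<rho>: "0 < \<rho>" "\<rho> \<le> \<rho>\<^sub>0" "\<rho> \<le> 1/2" and \<epsilon>: "0 < \<epsilon>" "\<epsilon> \<le> \<epsilon>\<^sub>0" "\<epsilon> < \<rho>"
    using \<rho>\<^sub>0 \<epsilon>\<^sub>0 unfolding \<rho>_def \<epsilon>_def by auto
  obtain s t where st: "\<delta> \<le> s" "\<delta> \<le> t" and w: "deform u v s t (\<epsilon> * cutoff \<rho> (s, t)) \<in> Mset p q r a b c"
    using meets[OF less_imp_le[OF \<epsilon>(1)] \<epsilon>(2) \<rho>(1,3)] by blast
  have s0: "0 < s" "0 < t"
    using st \<delta> by auto
  have "Ifun p q r a b c (deform u v s t (\<epsilon> * cutoff \<rho> (s, t))) < Ifun p q r a b c u"
  proof (cases "cutoff \<rho> (s, t) = 0")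
    case True
    \<comment> \<open>away from (1, 1) the rescaling alone lowers the energy\<close>
    hence "(s, t) \<noteq> (1, 1)"
      using cutoff_1_1[of \<rho>] by auto
    thus ?thesis
      using True Ifun_scale_parts_less[OF u s0] by (simp add: deform_0)
  next
    case False
    hence c: "0 < cutoff \<rho> (s, t)"
      using cutoff_bounds[OF \<rho>(1), of "(s, t)"] by simp
    hence pos: "0 < \<epsilon> * cutoff \<rho> (s, t)"
      using \<epsilon>(1) by simp
    \<comment> \<open>near (1, 1) the deformation along v lowers the energy\<close>
    have "\<bar>s - 1\<bar> < \<rho>\<^sub>0" "\<bar>t - 1\<bar> < \<rho>\<^sub>0" "\<epsilon> * cutoff \<rho> (s, t) < \<rho>\<^sub>0"
      using cutoff_pos_imp[OF \<rho>(1) c] \<rho> \<epsilon> cutoff_bounds[OF \<rho>(1), of "(s, t)"]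
      by (auto intro: order.strict_trans1[OF mult_left_le])
    hence "Ifun p q r a b c (deform u v s t (\<epsilon> * cutoff \<rho> (s, t)))
        \<le> Ifun p q r a b c (scale_parts u s t) - \<epsilon> * cutoff \<rho> (s, t) * (dIfun p q r a b c u v / 2)"
      using descent pos by simp
    also have "\<dots> < Ifun p q r a b c (scale_parts u s t)"
      using pos d by simp
    also have "\<dots> \<le> Ifun p q r a b c u"
      by (rule Ifun_scale_parts_le[OF uE nehari s0])
    finally show ?thesis .
  qed
  thus ?thesis
    using w by blast
qed

lemma dIfun_eq_0_if_minimizer:
  assumes u: "u \<in> Mset p q r a b c"
    and min: "Ifun p q r a b c u = (INF w \<in> Mset p q r a b c. Ifun p q r a b c w)"
    and v: "v \<in> Espace p a b"
  shows "dIfun p q r a b c u v = 0"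
proof (rule ccontr)
  assume "dIfun p q r a b c u v \<noteq> 0"
  moreover have "dIfun p q r a b c u (\<lambda>n. - v n) = - dIfun p q r a b c u v"
    using u v by (intro dIfun_uminus_right) (simp_all add: Mset_def Dspace_eq_Espace)
  ultimately obtain v' where "v' \<in> Espace p a b" "0 < dIfun p q r a b c u v'"
    using v Espace_uminus[OF v] by (metis neg_0_less_iff_less linorder_neqE_linordered_idom)
  then obtain w where w: "w \<in> Mset p q r a b c" "Ifun p q r a b c w < Ifun p q r a b c u"
    using exists_Mset_below_if_dIfun_pos[OF u] by blast
  have "bdd_below (Ifun p q r a b c ` Mset p q r a b c)"
    using Ifun_nonneg_on_Mset by (intro bdd_belowI[of _ 0]) auto
  hence "Ifun p q r a b c u \<le> Ifun p q r a b c w"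
    unfolding min using w(1) by (rule cINF_lower)
  thus False
    using w(2) by simp
qed

end

theorem lemma2p10:
  fixes p q r :: real and a b c :: "int \<Rightarrow> real" and u0 :: "int \<Rightarrow> real"
  assumes "1 < p" and "p < q" and "p / 2 \<in> \<nat>" and "p / 2 > 0" and "r \<ge> 1"
    and "\<And>n. a n > 0" and "\<And>n. b n > 0" and "\<And>n. c n > 0"
    and C1: "\<exists>b0>0. \<forall>n. b n \<ge> b0" "filterlim b at_top at_top" "filterlim b at_top at_bot"
    and C2: "\<exists>c0>0. \<forall>n. c n \<le> c0" "c summable_on UNIV"
    and u0M: "u0 \<in> Mset p q r a b c"
    and u0min: "Ifun p q r a b c u0 = (INF u \<in> Mset p q r a b c. Ifun p q r a b c u)"
  shows "\<forall>v \<in> Dspace p q r a b c. dIfun p q r a b c u0 v = 0"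
proof -
  obtain k :: nat where k: "p / 2 = real k"
    using assms(3) by (auto elim: Nats_cases)
  obtain b0 where b0: "0 < b0" "\<And>n. b0 \<le> b n"
    using C1(1) by blast
  interpret nehari_setting q r p "2 * k" a b c b0
    by unfold_locales (use k assms(1,2,4-8) b0 C2(2) in auto)
  show ?thesis
    using u0M u0min by (simp add: Dspace_eq_Espace dIfun_eq_0_if_minimizer)
qed

end
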